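(* Let $m,n\ge1$ and $Z\subset[1,m]\times[1,n]$. Let $R=\mathbb{C}[x_{ij}:(i,j)\in([1,m]\times[1,n])\setminus Z]$ and let $X$ be the $m\times n$ matrix whose $(i,j)$-entry is $x_{ij}$ if $(i,j)\notin Z$ and $0$ if $(i,j)\in Z$. Let $\mathcal{G}_2(Z)\subset R$ be the set of $2\times2$ minors of $X$, and $I_2(Z)$ the ideal they generate. Then for every total order on the variables of $R$, $\mathcal{G}_2(Z)$ is a Gröbner basis of $I_2(Z)$ with respect to the degree reverse lexicographic order induced by that total order.
   Context: Degree revlex order (for variables ordered $x_1>\dots>x_N$): $x^a>x^b$ if $\sum a_i>\sum b_i$, or the degrees are equal and the rightmost nonzero entry of $a-b$ is negative. A finite generating set $G$ of $I$ is a Gröbner basis if the initial ideal of $I$ is generated by the initial monomials of elements of $G$. *)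

theory Defs
  imports Complex_Main "HOL-Library.Poly_Mapping"
begin

text \<open>Variables are indexed by pairs (i,j). A monomial is a finitely supported
exponent vector, a polynomial is a finitely supported map from monomials to complex
coefficients.\<close>

type_synonym var = "nat \<times> nat"
type_synonym mon = "var \<Rightarrow>\<^sub>0 nat"
type_synonym cpoly = "mon \<Rightarrow>\<^sub>0 complex"

definition Var :: "var \<Rightarrow> cpoly" where
  "Var v = Poly_Mapping.single (Poly_Mapping.single v 1) 1"

definition mon_poly :: "mon \<Rightarrow> cpoly" where
  "mon_poly a = Poly_Mapping.single a 1"

definition deg :: "mon \<Rightarrow> nat" where
  "deg a = (\<Sum>v\<in>Poly_Mapping.keys a. Poly_Mapping.lookup a v)"

text \<open>The polynomial ring C[x_v : v \<in> V], as a subset of all polynomials.\<close>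
definition polys :: "var set \<Rightarrow> cpoly set" where
  "polys V = {f. \<forall>a\<in>Poly_Mapping.keys f. Poly_Mapping.keys a \<subseteq> V}"

definition ideal_gen :: "var set \<Rightarrow> cpoly set \<Rightarrow> cpoly set" where
  "ideal_gen V G = {f. \<exists>S c. finite S \<and> S \<subseteq> G \<and> (\<forall>g\<in>S. c g \<in> polys V)
                          \<and> f = (\<Sum>g\<in>S. c g * g)}"

text \<open>Degree reverse lexicographic order induced by a strict total order r on the
variables V ((v,w) \<in> r means v < w). drl_greater V r a b means a > b.\<close>
definition drl_greater :: "var set \<Rightarrow> var rel \<Rightarrow> mon \<Rightarrow> mon \<Rightarrow> bool" where
  "drl_greater V r a b \<longleftrightarrow> deg a > deg b \<or>
     (deg a = deg b \<and> (\<exists>v\<in>V. Poly_Mapping.lookup a v < Poly_Mapping.lookup b v \<and>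
                              (\<forall>w\<in>V. (w, v) \<in> r \<longrightarrow> Poly_Mapping.lookup a w = Poly_Mapping.lookup b w)))"

definition init_mon :: "var set \<Rightarrow> var rel \<Rightarrow> cpoly \<Rightarrow> mon" where
  "init_mon V r f = (THE a. a \<in> Poly_Mapping.keys f \<and> (\<forall>b\<in>Poly_Mapping.keys f. b \<noteq> a \<longrightarrow> drl_greater V r a b))"

definition init_ideal :: "var set \<Rightarrow> var rel \<Rightarrow> cpoly set \<Rightarrow> cpoly set" where
  "init_ideal V r I = ideal_gen V {mon_poly (init_mon V r f) | f. f \<in> I \<and> f \<noteq> 0}"

definition is_groebner_basis :: "var set \<Rightarrow> var rel \<Rightarrow> cpoly set \<Rightarrow> cpoly set \<Rightarrow> bool" where
  "is_groebner_basis V r G I \<longleftrightarrow> G \<subseteq> polys V \<and> finite G \<and> ideal_gen V G = I \<and>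
     init_ideal V r I = ideal_gen V {mon_poly (init_mon V r g) | g. g \<in> G \<and> g \<noteq> 0}"

definition Xmat :: "var set \<Rightarrow> nat \<Rightarrow> nat \<Rightarrow> cpoly" where
  "Xmat Z i j = (if (i, j) \<in> Z then 0 else Var (i, j))"

definition minors2 :: "nat \<Rightarrow> nat \<Rightarrow> var set \<Rightarrow> cpoly set" where
  "minors2 m n Z = {Xmat Z i1 j1 * Xmat Z i2 j2 - Xmat Z i1 j2 * Xmat Z i2 j1 | i1 i2 j1 j2.
      1 \<le> i1 \<and> i1 < i2 \<and> i2 \<le> m \<and> 1 \<le> j1 \<and> j1 < j2 \<and> j2 \<le> n}"

end

theory Submission
  imports Defs "HOL-Library.FuncSet"
begin

text \<open>By Buchberger's criterion it suffices that, for minors \<open>g, h\<close> and monomials \<open>t, s\<close>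
  with \<open>t in(g) = s in(h) = D\<close>, the S-polynomial \<open>t g / lc(g) - s h / lc(h)\<close> is a
  combination of multiples \<open>u g'\<close> of minors all of whose monomials lie below \<open>D\<close>.
  If \<open>in(g)\<close> and \<open>in(h)\<close> share no variable, the syzygy behind the product criterion gives
  this. Otherwise \<open>g\<close> and \<open>h\<close> lie in a common \<open>2 \<times> 3\<close>, \<open>3 \<times> 2\<close> or \<open>3 \<times> 3\<close>
  submatrix, and up to a monomial factor the S-polynomial is, by Laplace expansion, a sum of
  one or two variable multiples of \<open>2 \<times> 2\<close> minors of that submatrix. In the \<open>3 \<times> 3\<close>
  case there are two such expansions, and the least of the nine variables decides which one
  stays below \<open>D\<close>. Entries in \<open>Z\<close> are zero, which only deletes terms.\<close>

abbreviation keys :: "('a \<Rightarrow>\<^sub>0 'b::zero) \<Rightarrow> 'a set" where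
  "keys \<equiv> Poly_Mapping.keys"

abbreviation lookup :: "('a \<Rightarrow>\<^sub>0 'b::zero) \<Rightarrow> 'a \<Rightarrow> 'b" where
  "lookup \<equiv> Poly_Mapping.lookup"

abbreviation single :: "'a \<Rightarrow> 'b::zero \<Rightarrow> 'a \<Rightarrow>\<^sub>0 'b" where
  "single \<equiv> Poly_Mapping.single"

section \<open>Monomials\<close>

lemma deg_eq_sum_superset:
  assumes "finite K" "keys a \<subseteq> K"
  shows "deg a = (\<Sum>v\<in>K. lookup a v)"
  unfolding deg_def
  by (rule sum.mono_neutral_left) (use assms in \<open>auto simp: in_keys_iff\<close>)

lemma deg_add: "deg (a + b) = deg a + deg b"
proof -
  let ?K = "keys a \<union> keys b"
  have "deg (a + b) = (\<Sum>v\<in>?K. lookup (a + b) v)"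
    by (rule deg_eq_sum_superset) (auto dest: set_mp[OF keys_add])
  also have "\<dots> = (\<Sum>v\<in>?K. lookup a v) + (\<Sum>v\<in>?K. lookup b v)"
    by (simp add: lookup_add sum.distrib)
  also have "\<dots> = deg a + deg b"
    by (subst (1 2) deg_eq_sum_superset[of ?K]) auto
  finally show ?thesis .
qed

lemma deg_single [simp]: "deg (single v n) = n"
  by (simp add: deg_def)

lemma lookup_le_deg: "lookup a v \<le> deg a"
proof (cases "v \<in> keys a")
  case True
  then show ?thesis unfolding deg_def by (intro member_le_sum) auto
qed (simp add: in_keys_iff)

lemma finite_mons_deg_le:
  assumes "finite V"
  shows "finite {a::mon. keys a \<subseteq> V \<and> deg a \<le> d}"
proof -
  let ?A = "{a::mon. keys a \<subseteq> V \<and> deg a \<le> d}"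
  let ?f = "\<lambda>a::mon. restrict (lookup a) V"
  have "?f ` ?A \<subseteq> (\<Pi>\<^sub>E v\<in>V. {..d})"
  proof
    fix x assume "x \<in> ?f ` ?A"
    then obtain a where a: "a \<in> ?A" "x = ?f a"
      by blast
    have "lookup a v \<le> d" for v
      using lookup_le_deg[of a v] a(1) by simp
    then show "x \<in> (\<Pi>\<^sub>E v\<in>V. {..d})"
      using a(2) by auto
  qed
  then have "finite (?f ` ?A)"
    by (rule finite_subset) (simp add: assms finite_PiE)
  moreover have "inj_on ?f ?A"
  proof (rule inj_onI, rule poly_mapping_eqI)
    fix a b v assume ab: "a \<in> ?A" "b \<in> ?A" "?f a = ?f b"
    show "lookup a v = lookup b v"
    proof (cases "v \<in> V")
      case True
      then show ?thesis using ab(3) by (metis restrict_apply')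
    next
      case False
      then show ?thesis using ab(1,2) by (metis (no_types, lifting) in_keys_iff mem_Collect_eq subsetD)
    qed
  qed
  ultimately show ?thesis
    using finite_imageD by blast
qed

definition mon_of :: "var \<Rightarrow> mon" where
  "mon_of v = single v 1"

lemma lookup_mon_of [simp]: "lookup (mon_of v) w = (if v = w then 1 else 0)"
  by (simp add: mon_of_def lookup_single when_def)

lemma keys_mon_of [simp]: "keys (mon_of v) = {v}"
  by (simp add: mon_of_def)

lemma deg_mon_of [simp]: "deg (mon_of v) = 1"
  by (simp add: mon_of_def)

lemma Var_eq_single_mon_of: "Var v = single (mon_of v) 1"
  by (simp add: Var_def mon_of_def)

lemma keys_mon_of_add: "keys (mon_of a + mon_of b) \<subseteq> {a, b}"
  using keys_add[of "mon_of a" "mon_of b"] by auto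

lemma keys_mon_of_sum3: "keys (mon_of a + mon_of b + mon_of c) \<subseteq> {a, b, c}"
  using keys_add[of "mon_of a + mon_of b" "mon_of c"] keys_mon_of_add[of a b] by auto

lemma mon_diff_disjoint:
  fixes A B :: mon
  assumes "keys A \<inter> keys B = {}"
  shows "A - B = A"
proof (rule poly_mapping_eqI)
  fix v
  have "v \<notin> keys A \<or> v \<notin> keys B"
    using assms by blast
  then show "lookup (A - B) v = lookup A v"
    by (auto simp: lookup_minus in_keys_iff)
qed

lemma keys_mon_diff: "keys (t - q) \<subseteq> keys (t :: mon)"
  by (auto simp: in_keys_iff lookup_minus)

text \<open>Monomials are written additively, so the truncated difference \<open>B - A\<close> is
  \<open>B / gcd(A, B)\<close>: from \<open>t A = s B\<close> we get \<open>t = w B / gcd(A, B)\<close> and \<open>s = w A / gcd(A, B)\<close>.\<close>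

lemma mon_common_multiple:
  fixes t s A B :: mon
  assumes "t + A = s + B"
  shows "t = (t - (B - A)) + (B - A)" "s = (t - (B - A)) + (A - B)"
proof -
  have eq: "lookup t v + lookup A v = lookup s v + lookup B v" for v
    using arg_cong[OF assms, of "\<lambda>p. lookup p v"] by (simp add: lookup_add)
  show "t = (t - (B - A)) + (B - A)"
  proof (rule poly_mapping_eqI)
    fix v
    show "lookup t v = lookup (t - (B - A) + (B - A)) v"
      using eq[of v] by (simp add: lookup_add lookup_minus; arith)
  qed
  show "s = (t - (B - A)) + (A - B)"
  proof (rule poly_mapping_eqI)
    fix v
    show "lookup s v = lookup (t - (B - A) + (A - B)) v"
      using eq[of v] by (simp add: lookup_add lookup_minus; arith)
  qed
qed

lemma single_add_mon_of: "single (w + mon_of v) (1::complex) = single w 1 * Var v"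
  by (simp add: Var_eq_single_mon_of mult_single)

section \<open>The degree reverse lexicographic order\<close>

locale drl_order =
  fixes V :: "var set" and r :: "var rel"
  assumes finite_vars: "finite V"
    and strict_linear: "strict_linear_order_on V r"
begin

abbreviation drl_gt :: "mon \<Rightarrow> mon \<Rightarrow> bool" (infix "\<succ>" 50) where
  "a \<succ> b \<equiv> drl_greater V r a b"

abbreviation drl_ge :: "mon \<Rightarrow> mon \<Rightarrow> bool" (infix "\<succeq>" 50) where
  "a \<succeq> b \<equiv> a = b \<or> a \<succ> b"

lemma var_trans: "(x, y) \<in> r \<Longrightarrow> (y, z) \<in> r \<Longrightarrow> (x, z) \<in> r"
  using strict_linear unfolding strict_linear_order_on_def by (meson transD)

lemma var_irrefl: "(x, x) \<notin> r"
  using strict_linear unfolding strict_linear_order_on_def by (simp add: irreflD)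

lemma var_total: "x \<in> V \<Longrightarrow> y \<in> V \<Longrightarrow> x \<noteq> y \<Longrightarrow> (x, y) \<in> r \<or> (y, x) \<in> r"
  using strict_linear unfolding strict_linear_order_on_def total_on_def by blast

lemma least_var_exists:
  assumes "finite A" "A \<noteq> {}" "A \<subseteq> V"
  shows "\<exists>\<mu>\<in>A. \<forall>z\<in>A. z \<noteq> \<mu> \<longrightarrow> (\<mu>, z) \<in> r"
  using assms
proof (induction A rule: finite_ne_induct)
  case (insert x F)
  then obtain \<mu> where \<mu>: "\<mu> \<in> F" "\<forall>z\<in>F. z \<noteq> \<mu> \<longrightarrow> (\<mu>, z) \<in> r"
    by auto
  have "x \<noteq> \<mu>" "x \<in> V" "\<mu> \<in> V"
    using insert \<mu> by auto
  then consider "(x, \<mu>) \<in> r" | "(\<mu>, x) \<in> r"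
    using var_total by blast
  then show ?case
  proof cases
    case 1
    have "(x, z) \<in> r" if "z \<in> F" for z
      using that 1 \<mu> var_trans by (cases "z = \<mu>") blast+
    then show ?thesis
      by blast
  next
    case 2
    then show ?thesis
      using \<mu> by blast
  qed
qed simp

lemma drl_irrefl: "\<not> a \<succ> a"
  unfolding drl_greater_def by auto

lemma drl_deg_le: "a \<succ> b \<Longrightarrow> deg b \<le> deg a"
  unfolding drl_greater_def by auto

lemma drl_add_left_iff: "t + a \<succ> t + b \<longleftrightarrow> a \<succ> b"
  unfolding drl_greater_def by (simp add: deg_add lookup_add)

lemma drl_trans:
  assumes ab: "a \<succ> b" and bc: "b \<succ> c"
  shows "a \<succ> c"
proof (cases "deg a = deg b \<and> deg b = deg c")
  case False
  then show ?thesis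
    using ab bc unfolding drl_greater_def by auto
next
  case True
  from ab True obtain v where v: "v \<in> V" "lookup a v < lookup b v"
      "\<forall>w\<in>V. (w, v) \<in> r \<longrightarrow> lookup a w = lookup b w"
    unfolding drl_greater_def by auto
  from bc True obtain u where u: "u \<in> V" "lookup b u < lookup c u"
      "\<forall>w\<in>V. (w, u) \<in> r \<longrightarrow> lookup b w = lookup c w"
    unfolding drl_greater_def by auto
  have "\<exists>x\<in>V. lookup a x < lookup c x \<and> (\<forall>w\<in>V. (w, x) \<in> r \<longrightarrow> lookup a w = lookup c w)"
  proof (cases "u = v")
    case True
    then show ?thesis using u v by (intro bexI[of _ v]) auto
  next
    case False
    then consider "(u, v) \<in> r" | "(v, u) \<in> r"
      using var_total u(1) v(1) by blast
    then show ?thesis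
    proof cases
      case 1
      then have "lookup a u < lookup c u"
        using u v by simp
      moreover have "lookup a w = lookup c w" if "w \<in> V" "(w, u) \<in> r" for w
        using that u(3) v(3) var_trans[OF that(2) 1] by simp
      ultimately show ?thesis
        using u(1) by blast
    next
      case 2
      then have "lookup a v < lookup c v"
        using u v by simp
      moreover have "lookup a w = lookup c w" if "w \<in> V" "(w, v) \<in> r" for w
        using that u(3) v(3) var_trans[OF that(2) 2] by simp
      ultimately show ?thesis
        using v(1) by blast
    qed
  qed
  then show ?thesis
    using True unfolding drl_greater_def by auto
qed

lemma drl_asym: "a \<succ> b \<Longrightarrow> \<not> b \<succ> a"
  using drl_trans drl_irrefl by blast

lemma drl_total:
  assumes "keys a \<subseteq> V" "keys b \<subseteq> V" "a \<noteq> b"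
  shows "a \<succ> b \<or> b \<succ> a"
proof (cases "deg a = deg b")
  case True
  let ?D = "{v\<in>V. lookup a v \<noteq> lookup b v}"
  have "?D \<noteq> {}"
  proof
    assume "?D = {}"
    have "lookup a v = lookup b v" for v
    proof (cases "v \<in> V")
      case True
      then show ?thesis using \<open>?D = {}\<close> by blast
    next
      case False
      then show ?thesis using assms(1,2) by (metis in_keys_iff subsetD)
    qed
    then show False
      using assms(3) poly_mapping_eqI by blast
  qed
  then obtain \<mu> where \<mu>: "\<mu> \<in> ?D" "\<forall>z\<in>?D. z \<noteq> \<mu> \<longrightarrow> (\<mu>, z) \<in> r"
    using least_var_exists[of ?D] finite_vars by auto
  have "lookup a w = lookup b w" if "w \<in> V" "(w, \<mu>) \<in> r" for w
  proof (rule ccontr)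
    assume "lookup a w \<noteq> lookup b w"
    moreover have "w \<noteq> \<mu>"
      using that(2) var_irrefl by blast
    ultimately have "(\<mu>, w) \<in> r"
      using \<mu>(2) that(1) by blast
    then show False
      using var_trans[OF that(2)] var_irrefl by blast
  qed
  then show ?thesis
    using \<mu>(1) True unfolding drl_greater_def
    by (cases "lookup a \<mu> < lookup b \<mu>") (auto simp: linorder_neq_iff)
qed (auto simp: drl_greater_def)

lemma drl_greaterI_least_var:
  assumes "deg a = deg b" "\<mu> \<in> V" "lookup a \<mu> < lookup b \<mu>"
    and least: "\<forall>z \<in> keys a \<union> keys b. z \<noteq> \<mu> \<longrightarrow> (\<mu>, z) \<in> r"
  shows "a \<succ> b"
proof -
  have "lookup a w = lookup b w" if "(w, \<mu>) \<in> r" for w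
  proof -
    have "(\<mu>, w) \<notin> r"
      using var_trans[OF that] var_irrefl by blast
    moreover have "w \<noteq> \<mu>"
      using that var_irrefl by blast
    ultimately have "w \<notin> keys a \<union> keys b"
      using least by blast
    then show ?thesis by (simp add: in_keys_iff)
  qed
  then show ?thesis
    using assms unfolding drl_greater_def by blast
qed

lemma wf_drl: "wf {(b, a). keys a \<subseteq> V \<and> keys b \<subseteq> V \<and> a \<succ> b}"
proof (rule wf_finite_segments)
  show "irrefl {(b, a). keys a \<subseteq> V \<and> keys b \<subseteq> V \<and> a \<succ> b}"
    unfolding irrefl_def using drl_irrefl by blast
  show "trans {(b, a). keys a \<subseteq> V \<and> keys b \<subseteq> V \<and> a \<succ> b}"
    unfolding trans_def using drl_trans by blast
  fix a
  have "{b. (b, a) \<in> {(b, a). keys a \<subseteq> V \<and> keys b \<subseteq> V \<and> a \<succ> b}}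
      \<subseteq> {b. keys b \<subseteq> V \<and> deg b \<le> deg a}"
    using drl_deg_le by blast
  then show "finite {b. (b, a) \<in> {(b, a). keys a \<subseteq> V \<and> keys b \<subseteq> V \<and> a \<succ> b}}"
    using finite_mons_deg_le[OF finite_vars] finite_subset by blast
qed

lemma greatest_mon_exists:
  assumes "finite A" "A \<noteq> {}" "\<forall>a\<in>A. keys a \<subseteq> V"
  shows "\<exists>\<mu>\<in>A. \<forall>z\<in>A. z \<noteq> \<mu> \<longrightarrow> \<mu> \<succ> z"
  using assms
proof (induction A rule: finite_ne_induct)
  case (insert x F)
  then obtain \<mu> where \<mu>: "\<mu> \<in> F" "\<forall>z\<in>F. z \<noteq> \<mu> \<longrightarrow> \<mu> \<succ> z"
    by auto
  have "x \<noteq> \<mu>" "keys x \<subseteq> V" "keys \<mu> \<subseteq> V"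
    using insert \<mu> by auto
  then consider "x \<succ> \<mu>" | "\<mu> \<succ> x"
    using drl_total by blast
  then show ?case
  proof cases
    case 1
    have "x \<succ> z" if "z \<in> F" for z
      using that 1 \<mu> drl_trans by (cases "z = \<mu>") blast+
    then show ?thesis
      by blast
  next
    case 2
    then show ?thesis
      using \<mu> by blast
  qed
qed simp

lemma init_mon_eqI:
  assumes "a \<in> keys f" "\<forall>b\<in>keys f. b \<noteq> a \<longrightarrow> a \<succ> b"
  shows "init_mon V r f = a"
  unfolding init_mon_def
proof (rule the_equality)
  fix a' assume a': "a' \<in> keys f \<and> (\<forall>b\<in>keys f. b \<noteq> a' \<longrightarrow> a' \<succ> b)"
  show "a' = a"
  proof (rule ccontr)
    assume "a' \<noteq> a"
    then have "a \<succ> a'" "a' \<succ> a"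
      using assms a' by auto
    then show False
      using drl_asym by blast
  qed
qed (use assms in blast)

lemma init_mon_greatest:
  assumes "f \<in> polys V" "f \<noteq> 0"
  shows "init_mon V r f \<in> keys f" "\<forall>b\<in>keys f. b \<noteq> init_mon V r f \<longrightarrow> init_mon V r f \<succ> b"
proof -
  obtain \<mu> where "\<mu> \<in> keys f" "\<forall>z\<in>keys f. z \<noteq> \<mu> \<longrightarrow> \<mu> \<succ> z"
    using greatest_mon_exists[of "keys f"] assms unfolding polys_def by auto
  then show "init_mon V r f \<in> keys f" "\<forall>b\<in>keys f. b \<noteq> init_mon V r f \<longrightarrow> init_mon V r f \<succ> b"
    using init_mon_eqI by simp_all
qed

lemma drl_greater_addI: "a \<succ> b \<Longrightarrow> D1 = c + a \<Longrightarrow> D2 = c + b \<Longrightarrow> D1 \<succ> D2"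
  by (simp add: drl_add_left_iff)

lemma least_var_of_smaller_quadratic:
  assumes "y \<in> V" "p \<in> V" "y \<noteq> u" "p \<noteq> u" "y \<noteq> w" "p \<noteq> w"
    and greater: "mon_of y + mon_of p \<succ> mon_of u + mon_of w"
  shows "\<exists>v\<in>{u, w}. (v, y) \<in> r \<and> (v, p) \<in> r"
proof -
  have ne: "u \<noteq> y" "u \<noteq> p" "w \<noteq> y" "w \<noteq> p"
    using assms(3-6) by blast+
  have "deg (mon_of y + mon_of p) = deg (mon_of u + mon_of w)"
    by (simp add: deg_add)
  then obtain v where v: "v \<in> V" "lookup (mon_of y + mon_of p) v < lookup (mon_of u + mon_of w) v"
      "\<forall>z\<in>V. (z, v) \<in> r \<longrightarrow> lookup (mon_of y + mon_of p) z = lookup (mon_of u + mon_of w) z"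
    using greater unfolding drl_greater_def by auto
  have "v = u \<or> v = w" "v \<noteq> y" "v \<noteq> p"
    using v(2) ne by (auto simp: lookup_add split: if_splits)
  \<comment> \<open>\<open>y\<close> and \<open>p\<close> occur only on the left, so they cannot lie below the witness \<open>v\<close>\<close>
  moreover have "(v, y) \<in> r"
  proof (rule ccontr)
    assume "(v, y) \<notin> r"
    then have "(y, v) \<in> r"
      using var_total v(1) assms(1) \<open>v \<noteq> y\<close> by blast
    then have "lookup (mon_of y + mon_of p) y = lookup (mon_of u + mon_of w) y"
      using v(3) assms(1) by blast
    then show False
      using ne by (simp add: lookup_add)
  qed
  moreover have "(v, p) \<in> r"
  proof (rule ccontr)
    assume "(v, p) \<notin> r"
    then have "(p, v) \<in> r"
      using var_total v(1) assms(2) \<open>v \<noteq> p\<close> by blast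
    then have "lookup (mon_of y + mon_of p) p = lookup (mon_of u + mon_of w) p"
      using v(3) assms(2) by blast
    then show False
      using ne by (simp add: lookup_add)
  qed
  ultimately show ?thesis
    by blast
qed

lemma drl_greater_cubicI:
  assumes "\<mu> \<in> V" "\<mu> \<in> {u1, u2, u3}" "\<mu> \<notin> {y1, y2, y3}"
    and least: "\<forall>z\<in>{y1, y2, y3, u1, u2, u3}. z \<noteq> \<mu> \<longrightarrow> (\<mu>, z) \<in> r"
  shows "mon_of y1 + mon_of y2 + mon_of y3 \<succ> mon_of u1 + mon_of u2 + mon_of u3"
proof (rule drl_greaterI_least_var)
  show "deg (mon_of y1 + mon_of y2 + mon_of y3) = deg (mon_of u1 + mon_of u2 + mon_of u3)"
    by (simp add: deg_add)
  show "lookup (mon_of y1 + mon_of y2 + mon_of y3) \<mu> < lookup (mon_of u1 + mon_of u2 + mon_of u3) \<mu>"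
    using assms(2,3) by (auto simp: lookup_add)
  show "\<forall>z\<in>keys (mon_of y1 + mon_of y2 + mon_of y3) \<union> keys (mon_of u1 + mon_of u2 + mon_of u3).
      z \<noteq> \<mu> \<longrightarrow> (\<mu>, z) \<in> r"
    using least keys_mon_of_sum3[of y1 y2 y3] keys_mon_of_sum3[of u1 u2 u3] by blast
qed (rule assms(1))

lemma least_var_not_above:
  assumes least: "\<forall>z\<in>S. z \<noteq> \<mu> \<longrightarrow> (\<mu>, z) \<in> r" and "v \<in> S" "(v, y) \<in> r"
  shows "\<mu> \<noteq> y"
proof
  assume "\<mu> = y"
  moreover have "v \<noteq> y"
    using assms(3) var_irrefl by blast
  ultimately have "(\<mu>, v) \<in> r"
    using least assms(2) by blast
  then show False
    using var_trans[OF assms(3)] \<open>\<mu> = y\<close> var_irrefl by blast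
qed

text \<open>The least of the nine variables lies below a variable of each antidiagonal
  \<open>u12 u21\<close> and \<open>u13 u31\<close>, hence off the diagonal \<open>y1 y2 y3\<close>, and it occurs in one of the
  two cubic monomials on the right.\<close>

lemma drl_cubic_exchange:
  assumes V: "y1 \<in> V" "y2 \<in> V" "y3 \<in> V" "u12 \<in> V" "u21 \<in> V" "u13 \<in> V" "u31 \<in> V"
      "u23 \<in> V" "u32 \<in> V"
    and dist: "distinct [y1, y2, y3, u12, u21, u13, u31, u23, u32]"
    and greater12: "mon_of y1 + mon_of y2 \<succ> mon_of u12 + mon_of u21"
    and greater13: "mon_of y1 + mon_of y3 \<succ> mon_of u13 + mon_of u31"
  shows "mon_of y1 + mon_of y2 + mon_of y3 \<succ> mon_of u12 + mon_of u23 + mon_of u31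
    \<or> mon_of y1 + mon_of y2 + mon_of y3 \<succ> mon_of u13 + mon_of u21 + mon_of u32"
proof -
  have "\<exists>v\<in>{u12, u21}. (v, y1) \<in> r \<and> (v, y2) \<in> r"
    by (rule least_var_of_smaller_quadratic[OF V(1,2) _ _ _ _ greater12]) (use dist in simp_all)
  then obtain v1 where v1: "v1 \<in> {u12, u21}" "(v1, y1) \<in> r" "(v1, y2) \<in> r"
    by blast
  have "\<exists>v\<in>{u13, u31}. (v, y1) \<in> r \<and> (v, y3) \<in> r"
    by (rule least_var_of_smaller_quadratic[OF V(1,3) _ _ _ _ greater13]) (use dist in simp_all)
  then obtain v2 where v2: "v2 \<in> {u13, u31}" "(v2, y3) \<in> r"
    by blast
  let ?S = "{y1, y2, y3, u12, u21, u13, u31, u23, u32}"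
  have "?S \<subseteq> V"
    using V by simp
  then obtain \<mu> where \<mu>: "\<mu> \<in> ?S" "\<forall>z\<in>?S. z \<noteq> \<mu> \<longrightarrow> (\<mu>, z) \<in> r"
    using least_var_exists[of ?S] by blast
  have "v1 \<in> ?S" "v2 \<in> ?S"
    using v1(1) v2(1) by blast+
  then have "\<mu> \<noteq> y1" "\<mu> \<noteq> y2" "\<mu> \<noteq> y3"
    using least_var_not_above[OF \<mu>(2)] v1(2,3) v2(2) by blast+
  moreover have "\<mu> \<in> V"
    using \<mu>(1) \<open>?S \<subseteq> V\<close> by blast
  ultimately have "\<mu> \<in> {u12, u23, u31} \<union> {u13, u21, u32}"
    using \<mu>(1) by (simp; blast)
  then consider "\<mu> \<in> {u12, u23, u31}" | "\<mu> \<in> {u13, u21, u32}"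
    by blast
  then show ?thesis
  proof cases
    case 1
    have "mon_of y1 + mon_of y2 + mon_of y3 \<succ> mon_of u12 + mon_of u23 + mon_of u31"
      by (rule drl_greater_cubicI[OF \<open>\<mu> \<in> V\<close> 1]) (use \<mu>(2) \<open>\<mu> \<noteq> y1\<close> \<open>\<mu> \<noteq> y2\<close> \<open>\<mu> \<noteq> y3\<close> in simp_all)
    then show ?thesis ..
  next
    case 2
    have "mon_of y1 + mon_of y2 + mon_of y3 \<succ> mon_of u13 + mon_of u21 + mon_of u32"
      by (rule drl_greater_cubicI[OF \<open>\<mu> \<in> V\<close> 2]) (use \<mu>(2) \<open>\<mu> \<noteq> y1\<close> \<open>\<mu> \<noteq> y2\<close> \<open>\<mu> \<noteq> y3\<close> in simp_all)
    then show ?thesis ..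
  qed
qed

end

lemma init_mon_uminus [simp]: "init_mon V r (- f) = init_mon V r f"
  by (simp add: init_mon_def)

section \<open>Representations with bounded monomials\<close>

lemma poly_mapping_sum_single: "p = (\<Sum>t\<in>keys p. single t (lookup p t))"
proof (rule poly_mapping_eqI)
  fix k
  show "lookup p k = lookup (\<Sum>t\<in>keys p. single t (lookup p t)) k"
    by (cases "k \<in> keys p") (simp_all add: lookup_sum lookup_single when_def in_keys_iff)
qed

lemma lookup_single_mult:
  fixes t k :: mon and g :: cpoly
  shows "lookup (single t a * g) (t + k) = a * lookup g k"
proof -
  have "single t a * g = (\<Sum>j\<in>keys g. single (t + j) (a * lookup g j))"
    by (subst poly_mapping_sum_single[of g]) (simp add: sum_distrib_left mult_single)
  then have "lookup (single t a * g) (t + k) = (\<Sum>j\<in>keys g. (a * lookup g j) when (t + j = t + k))"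
    by (simp add: lookup_sum lookup_single)
  also have "\<dots> = (\<Sum>j\<in>keys g. (a * lookup g j) when (j = k))"
    by (intro sum.cong refl) (auto simp: when_def)
  also have "\<dots> = a * lookup g k"
    by (cases "k \<in> keys g") (simp_all add: when_def in_keys_iff)
  finally show ?thesis .
qed

lemma keys_single_mult: "keys (single t a * g) \<subseteq> (+) t ` keys g"
  using keys_mult[of "single t a" g] by (auto split: if_splits)

inductive rep_within :: "var set \<Rightarrow> cpoly set \<Rightarrow> (mon \<Rightarrow> bool) \<Rightarrow> cpoly \<Rightarrow> bool"
  for V G P where
  zero: "rep_within V G P 0"
| add_term: "rep_within V G P f \<Longrightarrow> g \<in> G \<Longrightarrow> keys t \<subseteq> V \<Longrightarrow> \<forall>k\<in>keys g. P (t + k)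
    \<Longrightarrow> rep_within V G P (f + single t a * g)"

lemma rep_within_term:
  "g \<in> G \<Longrightarrow> keys t \<subseteq> V \<Longrightarrow> \<forall>k\<in>keys g. P (t + k) \<Longrightarrow> rep_within V G P (single t a * g)"
  using rep_within.add_term[OF rep_within.zero] by simp

lemma rep_within_add:
  "rep_within V G P h \<Longrightarrow> rep_within V G P f \<Longrightarrow> rep_within V G P (f + h)"
proof (induction h rule: rep_within.induct)
  case (add_term h g t a)
  then have "rep_within V G P ((f + h) + single t a * g)"
    using rep_within.add_term by blast
  then show ?case
    by (simp add: add.assoc)
qed simp

lemma rep_within_scale:
  "rep_within V G P f \<Longrightarrow> rep_within V G P (single 0 c * f)"
proof (induction f rule: rep_within.induct)
  case (add_term f g t a)
  have "single 0 c * (f + single t a * g) = single 0 c * f + single t (c * a) * g"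
    by (simp add: distrib_left mult.assoc[symmetric] mult_single)
  then show ?case
    using add_term rep_within.add_term by metis
qed (simp add: rep_within.zero)

lemma rep_within_diff:
  assumes "rep_within V G P f" "rep_within V G P h"
  shows "rep_within V G P (f - h)"
proof -
  have "rep_within V G P (single 0 (- 1) * h)"
    using assms(2) by (rule rep_within_scale)
  then have "rep_within V G P (- h)"
    by (simp add: single_uminus)
  from rep_within_add[OF this assms(1)] show ?thesis
    by simp
qed

lemma rep_within_mono:
  assumes "rep_within V G P f" "\<And>k. P k \<Longrightarrow> Q k"
  shows "rep_within V G Q f"
  using assms(1)
proof (induction f rule: rep_within.induct)
  case (add_term f g t a)
  then show ?case
    using assms(2) rep_within.add_term[of V G Q f g t] by blast
qed (rule rep_within.zero)

lemma rep_within_keys: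
  assumes "rep_within V G P f"
  shows "\<forall>k\<in>keys f. P k"
  using assms
proof (induction f rule: rep_within.induct)
  case (add_term f g t a)
  then show ?case
    using keys_add[of f "single t a * g"] keys_single_mult[of t a g] by blast
qed simp

section \<open>Generated ideals\<close>

lemma polys_zero: "0 \<in> polys V"
  by (simp add: polys_def)

lemma polys_one: "1 \<in> polys V"
  by (simp add: polys_def)

lemma polys_single: "keys t \<subseteq> V \<Longrightarrow> single t c \<in> polys V"
  by (simp add: polys_def)

lemma polys_add: "p \<in> polys V \<Longrightarrow> q \<in> polys V \<Longrightarrow> p + q \<in> polys V"
  unfolding polys_def using keys_add[of p q] by blast

lemma polys_mult:
  assumes "p \<in> polys V" "q \<in> polys V"
  shows "p * q \<in> polys V"
  unfolding polys_def
proof (intro CollectI ballI)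
  fix k assume "k \<in> keys (p * q)"
  then obtain a b where "a \<in> keys p" "b \<in> keys q" "k = a + b"
    using keys_mult[of p q] by blast
  then show "keys k \<subseteq> V"
    using assms keys_add[of a b] unfolding polys_def by blast
qed

lemma ideal_gen_zero: "0 \<in> ideal_gen V B"
  unfolding ideal_gen_def by (rule CollectI, rule exI[of _ "{}"]) simp

lemma ideal_gen_generator: "g \<in> B \<Longrightarrow> g \<in> ideal_gen V B"
  unfolding ideal_gen_def
  by (rule CollectI, rule exI[of _ "{g}"], rule exI[of _ "\<lambda>_. 1"]) (simp add: polys_one)

lemma ideal_gen_add:
  assumes "f \<in> ideal_gen V B" "h \<in> ideal_gen V B"
  shows "f + h \<in> ideal_gen V B"
proof -
  obtain S1 c1 where 1: "finite S1" "S1 \<subseteq> B" "\<forall>g\<in>S1. c1 g \<in> polys V" "f = (\<Sum>g\<in>S1. c1 g * g)"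
    using assms(1) unfolding ideal_gen_def by blast
  obtain S2 c2 where 2: "finite S2" "S2 \<subseteq> B" "\<forall>g\<in>S2. c2 g \<in> polys V" "h = (\<Sum>g\<in>S2. c2 g * g)"
    using assms(2) unfolding ideal_gen_def by blast
  define c where "c g = (if g \<in> S1 then c1 g else 0) + (if g \<in> S2 then c2 g else 0)" for g
  have restrict: "(\<Sum>g\<in>S1 \<union> S2. (if g \<in> S then c' g else 0) * g) = (\<Sum>g\<in>S. c' g * g)"
    if "S \<subseteq> S1 \<union> S2" for S c'
  proof -
    have "(\<Sum>g\<in>S1 \<union> S2. (if g \<in> S then c' g else 0) * g)
        = (\<Sum>g\<in>S1 \<union> S2. if g \<in> S then c' g * g else 0)"
      by (intro sum.cong) auto
    also have "\<dots> = (\<Sum>g\<in>(S1 \<union> S2) \<inter> S. c' g * g)"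
      using 1(1) 2(1) by (simp add: sum.inter_restrict)
    finally show ?thesis
      using that by (simp add: Int_absorb1)
  qed
  have "f + h = (\<Sum>g\<in>S1 \<union> S2. c g * g)"
    unfolding c_def distrib_right sum.distrib 1(4) 2(4) by (simp add: restrict)
  moreover have "\<forall>g\<in>S1 \<union> S2. c g \<in> polys V"
    using 1(3) 2(3) polys_zero polys_add unfolding c_def by simp
  ultimately show ?thesis
    unfolding ideal_gen_def using 1(1,2) 2(1,2)
    by (intro CollectI exI[of _ "S1 \<union> S2"] exI[of _ c]) simp
qed

lemma ideal_gen_mult:
  assumes "p \<in> polys V" "f \<in> ideal_gen V B"
  shows "p * f \<in> ideal_gen V B"
proof -
  obtain S c where S: "finite S" "S \<subseteq> B" "\<forall>g\<in>S. c g \<in> polys V" "f = (\<Sum>g\<in>S. c g * g)"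
    using assms(2) unfolding ideal_gen_def by blast
  have "p * f = (\<Sum>g\<in>S. (p * c g) * g)"
    unfolding S(4) by (simp add: sum_distrib_left mult.assoc)
  moreover have "\<forall>g\<in>S. p * c g \<in> polys V"
    using S(3) polys_mult[OF assms(1)] by blast
  ultimately show ?thesis
    unfolding ideal_gen_def using S(1,2) by (intro CollectI exI[of _ S] exI[of _ "\<lambda>g. p * c g"]) simp
qed

lemma ideal_gen_sum:
  "finite A \<Longrightarrow> \<forall>x\<in>A. F x \<in> ideal_gen V B \<Longrightarrow> sum F A \<in> ideal_gen V B"
  by (induction A rule: finite_induct) (simp_all add: ideal_gen_zero ideal_gen_add)

lemma ideal_gen_mono: "A \<subseteq> B \<Longrightarrow> ideal_gen V A \<subseteq> ideal_gen V B"
  unfolding ideal_gen_def by blast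

lemma ideal_gen_subset:
  assumes "A \<subseteq> ideal_gen V B"
  shows "ideal_gen V A \<subseteq> ideal_gen V B"
proof
  fix f assume "f \<in> ideal_gen V A"
  then obtain S c where S: "finite S" "S \<subseteq> A" "\<forall>g\<in>S. c g \<in> polys V" "f = (\<Sum>g\<in>S. c g * g)"
    unfolding ideal_gen_def by blast
  have "\<forall>g\<in>S. c g * g \<in> ideal_gen V B"
    using S(2,3) assms ideal_gen_mult by blast
  then show "f \<in> ideal_gen V B"
    unfolding S(4) by (rule ideal_gen_sum[OF S(1)])
qed

lemma is_groebner_basisI:
  assumes "G \<subseteq> polys V" "finite G"
    and divisible: "\<And>f. f \<in> ideal_gen V G \<Longrightarrow> f \<noteq> 0 \<Longrightarrow>
      \<exists>g\<in>G. g \<noteq> 0 \<and> (\<exists>t. keys t \<subseteq> V \<and> init_mon V r f = t + init_mon V r g)"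
  shows "is_groebner_basis V r G (ideal_gen V G)"
proof -
  let ?inits = "\<lambda>F. {mon_poly (init_mon V r f) | f. f \<in> F \<and> f \<noteq> 0}"
  have "?inits (ideal_gen V G) \<subseteq> ideal_gen V (?inits G)"
  proof
    fix x assume "x \<in> ?inits (ideal_gen V G)"
    then obtain f where f: "x = mon_poly (init_mon V r f)" "f \<in> ideal_gen V G" "f \<noteq> 0"
      by blast
    then obtain g t where g: "g \<in> G" "g \<noteq> 0" "keys t \<subseteq> V" "init_mon V r f = t + init_mon V r g"
      using divisible by blast
    then have "mon_poly (init_mon V r g) \<in> ideal_gen V (?inits G)"
      by (intro ideal_gen_generator) blast
    moreover have "x = single t 1 * mon_poly (init_mon V r g)"
      unfolding f(1) mon_poly_def g(4) by (simp add: mult_single)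
    ultimately show "x \<in> ideal_gen V (?inits G)"
      using ideal_gen_mult[OF polys_single[OF g(3)]] by simp
  qed
  then have "init_ideal V r (ideal_gen V G) \<subseteq> ideal_gen V (?inits G)"
    unfolding init_ideal_def by (rule ideal_gen_subset)
  moreover have "?inits G \<subseteq> ?inits (ideal_gen V G)"
    using ideal_gen_generator by blast
  then have "ideal_gen V (?inits G) \<subseteq> init_ideal V r (ideal_gen V G)"
    unfolding init_ideal_def by (rule ideal_gen_mono)
  ultimately show ?thesis
    unfolding is_groebner_basis_def using assms(1,2) by simp
qed

section \<open>Buchberger's criterion\<close>

locale spoly_criterion = drl_order +
  fixes G :: "cpoly set"
  assumes G_polys: "G \<subseteq> polys V"
    and spoly_rep_below: "\<And>g h t s d. g \<in> G \<Longrightarrow> h \<in> G \<Longrightarrow> g \<noteq> 0 \<Longrightarrow> h \<noteq> 0 \<Longrightarrow>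
      keys t \<subseteq> V \<Longrightarrow> keys s \<subseteq> V \<Longrightarrow> t + init_mon V r g = d \<Longrightarrow> s + init_mon V r h = d \<Longrightarrow>
      rep_within V G ((\<succ>) d) (single t (1 / lookup g (init_mon V r g)) * g
                                - single s (1 / lookup h (init_mon V r h)) * h)"
begin

abbreviation lm :: "cpoly \<Rightarrow> mon" where
  "lm \<equiv> init_mon V r"

abbreviation lc :: "cpoly \<Rightarrow> complex" where
  "lc g \<equiv> lookup g (lm g)"

lemma lm_greatest:
  assumes "g \<in> G" "g \<noteq> 0"
  shows "lm g \<in> keys g" "\<forall>k\<in>keys g. k \<noteq> lm g \<longrightarrow> lm g \<succ> k"
  using init_mon_greatest[OF subsetD[OF G_polys assms(1)] assms(2)] by simp_all

lemma keys_lm: "g \<in> G \<Longrightarrow> g \<noteq> 0 \<Longrightarrow> keys (lm g) \<subseteq> V"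
  using lm_greatest G_polys unfolding polys_def by blast

lemma lc_nonzero: "g \<in> G \<Longrightarrow> g \<noteq> 0 \<Longrightarrow> lc g \<noteq> 0"
  using lm_greatest by (simp add: in_keys_iff)

lemma lm_term_ge:
  assumes "g \<in> G" "g \<noteq> 0" "k \<in> keys g"
  shows "t + lm g \<succeq> t + k"
proof (cases "k = lm g")
  case False
  then have "lm g \<succ> k"
    using lm_greatest[OF assms(1,2)] assms(3) by blast
  then show ?thesis
    by (simp add: drl_add_left_iff)
qed simp

lemma keys_add_lm: "g \<in> G \<Longrightarrow> g \<noteq> 0 \<Longrightarrow> keys t \<subseteq> V \<Longrightarrow> keys (t + lm g) \<subseteq> V"
  using keys_lm keys_add[of t "lm g"] by blast

lemma rep_at_most_term:
  assumes "g \<in> G" "g \<noteq> 0" "keys t \<subseteq> V"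
  shows "rep_within V G ((\<succeq>) (t + lm g)) (single t a * g)"
  using lm_term_ge[OF assms(1,2)] by (intro rep_within_term[OF assms(1,3)]) blast

lemma rep_below_term:
  assumes "g \<in> G" "g \<noteq> 0" "keys t \<subseteq> V" "d \<succ> t + lm g"
  shows "rep_within V G ((\<succ>) d) (single t a * g)"
proof (rule rep_within_term[OF assms(1,3)], intro ballI)
  fix k assume "k \<in> keys g"
  then show "d \<succ> t + k"
    using lm_term_ge[OF assms(1,2), of k t] assms(4) drl_trans by auto
qed

lemma rep_at_most_add:
  assumes "keys d1 \<subseteq> V" "rep_within V G ((\<succeq>) d1) f1"
    and "keys d2 \<subseteq> V" "rep_within V G ((\<succeq>) d2) f2"
  shows "\<exists>d\<in>{d1, d2}. rep_within V G ((\<succeq>) d) (f1 + f2)"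
proof (cases "d1 \<succeq> d2")
  case True
  then have "d1 \<succeq> k" if "d2 \<succeq> k" for k
    using that drl_trans by blast
  then have "rep_within V G ((\<succeq>) d1) f2"
    by (rule rep_within_mono[OF assms(4)])
  from rep_within_add[OF this assms(2)] show ?thesis
    by blast
next
  case False
  then have "d2 \<succ> d1"
    using drl_total[OF assms(1,3)] by blast
  then have "d2 \<succeq> k" if "d1 \<succeq> k" for k
    using that drl_trans by blast
  then have "rep_within V G ((\<succeq>) d2) f1"
    by (rule rep_within_mono[OF assms(2)])
  from rep_within_add[OF assms(4) this] show ?thesis
    by blast
qed

definition single_top_rep :: "mon \<Rightarrow> cpoly \<Rightarrow> bool" where
  "single_top_rep d f \<longleftrightarrow> (\<exists>c t g. g \<in> G \<and> g \<noteq> 0 \<and> keys t \<subseteq> V \<and> t + lm g = d \<and>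
      rep_within V G ((\<succ>) d) (f - single t c * g))"

lemma single_top_repI:
  "g \<in> G \<Longrightarrow> g \<noteq> 0 \<Longrightarrow> keys t \<subseteq> V \<Longrightarrow> t + lm g = d \<Longrightarrow>
    rep_within V G ((\<succ>) d) (f - single t c * g) \<Longrightarrow> single_top_rep d f"
  unfolding single_top_rep_def by blast

lemma single_top_rep_add_below:
  assumes "single_top_rep d f" "rep_within V G ((\<succ>) d) h"
  shows "single_top_rep d (f + h)"
proof -
  obtain c t g where top: "g \<in> G" "g \<noteq> 0" "keys t \<subseteq> V" "t + lm g = d"
      "rep_within V G ((\<succ>) d) (f - single t c * g)"
    using assms(1) unfolding single_top_rep_def by blast
  have "rep_within V G ((\<succ>) d) ((f - single t c * g) + h)"
    using rep_within_add[OF assms(2) top(5)] .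
  then have "rep_within V G ((\<succ>) d) ((f + h) - single t c * g)"
    by (simp add: algebra_simps)
  then show ?thesis
    by (rule single_top_repI[OF top(1-4)])
qed

lemma single_top_rep_add_top:
  assumes "single_top_rep d f" "g \<in> G" "g \<noteq> 0" "keys t \<subseteq> V" "t + lm g = d"
  shows "single_top_rep d (f + single t a * g)"
proof -
  obtain c t0 g0 where top0: "g0 \<in> G" "g0 \<noteq> 0" "keys t0 \<subseteq> V" "t0 + lm g0 = d"
      "rep_within V G ((\<succ>) d) (f - single t0 c * g0)"
    using assms(1) unfolding single_top_rep_def by blast
  \<comment> \<open>the new top term is a multiple of \<open>g0\<close> plus a multiple of the S-polynomial of \<open>g\<close> and \<open>g0\<close>\<close>
  let ?S = "single t (1 / lc g) * g - single t0 (1 / lc g0) * g0"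
  let ?c = "a * lc g"
  have S: "rep_within V G ((\<succ>) d) ?S"
    using spoly_rep_below[OF assms(2) top0(1) assms(3) top0(2) assms(4) top0(3) assms(5) top0(4)] .
  have "single 0 ?c * single t (1 / lc g) = single t a"
    using lc_nonzero[OF assms(2,3)] by (simp add: mult_single)
  moreover have "single 0 ?c * single t0 (1 / lc g0) = single t0 (?c / lc g0)"
    by (simp add: mult_single)
  ultimately have eq: "(f - single t0 c * g0) + single 0 ?c * ?S
      = (f + single t a * g) - single t0 (c + ?c / lc g0) * g0"
    unfolding single_add right_diff_distrib mult.assoc[symmetric] by (simp add: algebra_simps)
  have "rep_within V G ((\<succ>) d) ((f + single t a * g) - single t0 (c + ?c / lc g0) * g0)"
    using rep_within_add[OF rep_within_scale[OF S, where c = ?c] top0(5)] unfolding eq .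
  then show ?thesis
    by (rule single_top_repI[OF top0(1-4)])
qed

lemma rep_at_most_cases:
  assumes "rep_within V G ((\<succeq>) d) f"
  shows "rep_within V G ((\<succ>) d) f \<or> single_top_rep d f"
  using assms
proof (induction f rule: rep_within.induct)
  case zero
  then show ?case
    by (simp add: rep_within.zero)
next
  case (add_term f g t a)
  show ?case
  proof (cases "g = 0")
    case True
    then show ?thesis
      using add_term.IH by simp
  next
    case g: False
    have "d \<succeq> t + lm g"
      using add_term.hyps(4) lm_greatest(1)[OF add_term.hyps(2) g] by blast
    then consider (below) "d \<succ> t + lm g" | (top) "t + lm g = d"
      by blast
    then show ?thesis
    proof cases
      case below
      then have "rep_within V G ((\<succ>) d) (single t a * g)"
        by (rule rep_below_term[OF add_term.hyps(2) g add_term.hyps(3)])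
      then show ?thesis
        using add_term.IH rep_within_add single_top_rep_add_below by blast
    next
      case top
      have "single_top_rep d (f + single t a * g)" if "rep_within V G ((\<succ>) d) f"
        using single_top_repI[OF add_term.hyps(2) g add_term.hyps(3) top, of "f + single t a * g" a] that
        by simp
      then show ?thesis
        using add_term.IH single_top_rep_add_top[OF _ add_term.hyps(2) g add_term.hyps(3) top] by blast
    qed
  qed
qed

lemma rep_below_cases:
  assumes "rep_within V G ((\<succ>) d) f"
  shows "f = 0 \<or> (\<exists>d'. keys d' \<subseteq> V \<and> d \<succ> d' \<and> rep_within V G ((\<succeq>) d') f)"
  using assms
proof (induction f rule: rep_within.induct)
  case (add_term f g t a)
  show ?case
  proof (cases "g = 0")
    case True
    then show ?thesis
      using add_term.IH by simp
  next
    case g: False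
    let ?d1 = "t + lm g"
    have d1: "keys ?d1 \<subseteq> V" "d \<succ> ?d1"
      using keys_add_lm[OF add_term.hyps(2) g add_term.hyps(3)] add_term.hyps(4)
        lm_greatest(1)[OF add_term.hyps(2) g] by blast+
    note T = rep_at_most_term[OF add_term.hyps(2) g add_term.hyps(3), of a]
    from add_term.IH show ?thesis
    proof
      assume "f = 0"
      then show ?thesis
        using T d1 by (intro disjI2 exI[of _ ?d1]) simp
    next
      assume "\<exists>d'. keys d' \<subseteq> V \<and> d \<succ> d' \<and> rep_within V G ((\<succeq>) d') f"
      then obtain d' where d': "keys d' \<subseteq> V" "d \<succ> d'" "rep_within V G ((\<succeq>) d') f"
        by blast
      then obtain d'' where "d'' \<in> {d', ?d1}" "rep_within V G ((\<succeq>) d'') (f + single t a * g)"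
        using rep_at_most_add[OF d'(1,3) d1(1) T] by blast
      then show ?thesis
        using d' d1 by blast
    qed
  qed
qed simp

lemma lm_eq_if_single_top:
  assumes "rep_within V G ((\<succeq>) d) f" "g \<in> G" "g \<noteq> 0" "t + lm g = d" "c \<noteq> 0"
    and "rep_within V G ((\<succ>) d) (f - single t c * g)"
  shows "lm f = d"
proof (rule init_mon_eqI)
  \<comment> \<open>\<open>d\<close> is not a monomial of the remainder, so it survives in \<open>f\<close>\<close>
  have "d \<notin> keys (f - single t c * g)"
    using rep_within_keys[OF assms(6)] drl_irrefl by blast
  moreover have "lookup (single t c * g) d = c * lc g"
    using lookup_single_mult[of t c g "lm g"] assms(4) by simp
  ultimately have "lookup f d = c * lc g"
    by (simp add: in_keys_iff lookup_minus)
  then show "d \<in> keys f"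
    using assms(5) lc_nonzero[OF assms(2,3)] by (simp add: in_keys_iff)
  show "\<forall>k\<in>keys f. k \<noteq> d \<longrightarrow> d \<succ> k"
    using rep_within_keys[OF assms(1)] by auto
qed

lemma lm_divisible_if_rep:
  assumes "keys d \<subseteq> V" "rep_within V G ((\<succeq>) d) f" "f \<noteq> 0"
  shows "\<exists>g\<in>G. g \<noteq> 0 \<and> (\<exists>t. keys t \<subseteq> V \<and> lm f = t + lm g)"
  using assms
proof (induction d arbitrary: f rule: wf_induct[OF wf_drl])
  case (1 d)
  have IH: "\<exists>g\<in>G. g \<noteq> 0 \<and> (\<exists>t. keys t \<subseteq> V \<and> lm h = t + lm g)"
    if "keys d' \<subseteq> V" "d \<succ> d'" "rep_within V G ((\<succeq>) d') h" "h \<noteq> 0" for d' h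
    using 1(1)[rule_format, of d' h] 1(2) that by blast
  have below: "\<exists>g\<in>G. g \<noteq> 0 \<and> (\<exists>t. keys t \<subseteq> V \<and> lm h = t + lm g)"
    if h: "rep_within V G ((\<succ>) d) h" "h \<noteq> 0" for h
    using rep_below_cases[OF h(1)] h(2) IH by blast
  from rep_at_most_cases[OF 1(3)] show ?case
  proof
    assume "rep_within V G ((\<succ>) d) f"
    then show ?thesis
      using below 1(4) by blast
  next
    assume "single_top_rep d f"
    then obtain c t g where top: "g \<in> G" "g \<noteq> 0" "keys t \<subseteq> V" "t + lm g = d"
        and R: "rep_within V G ((\<succ>) d) (f - single t c * g)"
      unfolding single_top_rep_def by blast
    show ?thesis
    proof (cases "c = 0")
      case True
      then show ?thesis
        using below[OF R] 1(4) by simp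
    next
      case False
      then have "lm f = t + lm g"
        using lm_eq_if_single_top[OF 1(3) top(1,2,4) _ R] top(4) by simp
      then show ?thesis
        using top(1-3) by blast
    qed
  qed
qed

lemma rep_at_most_exists_sum:
  assumes "finite A" "\<And>x. x \<in> A \<Longrightarrow> \<exists>d. keys d \<subseteq> V \<and> rep_within V G ((\<succeq>) d) (F x)"
  shows "\<exists>d. keys d \<subseteq> V \<and> rep_within V G ((\<succeq>) d) (sum F A)"
  using assms
proof (induction A rule: finite_induct)
  case empty
  have "rep_within V G ((\<succeq>) 0) (sum F {})"
    by (simp add: rep_within.zero)
  then show ?case
    by (intro exI[of _ 0]) simp
next
  case (insert x A)
  obtain d1 where d1: "keys d1 \<subseteq> V" "rep_within V G ((\<succeq>) d1) (F x)"
    using insert.prems by blast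
  obtain d2 where d2: "keys d2 \<subseteq> V" "rep_within V G ((\<succeq>) d2) (sum F A)"
    using insert.IH insert.prems by blast
  obtain d where "d \<in> {d1, d2}" "rep_within V G ((\<succeq>) d) (F x + sum F A)"
    using rep_at_most_add[OF d1 d2] by blast
  then show ?case
    using d1(1) d2(1) insert.hyps by auto
qed

lemma rep_at_most_exists:
  assumes "f \<in> ideal_gen V G"
  shows "\<exists>d. keys d \<subseteq> V \<and> rep_within V G ((\<succeq>) d) f"
proof -
  obtain S c where S: "finite S" "S \<subseteq> G" "\<forall>g\<in>S. c g \<in> polys V" "f = (\<Sum>g\<in>S. c g * g)"
    using assms unfolding ideal_gen_def by blast
  have term_rep: "\<exists>d. keys d \<subseteq> V \<and> rep_within V G ((\<succeq>) d) (single t a * g)"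
    if "g \<in> G" "keys t \<subseteq> V" for g t a
  proof (cases "g = 0")
    case True
    have "rep_within V G ((\<succeq>) 0) (single t a * g)"
      using True by (simp add: rep_within.zero)
    then show ?thesis
      by (intro exI[of _ 0]) simp
  next
    case False
    then show ?thesis
      using rep_at_most_term[OF that(1) False that(2)] keys_add_lm[OF that(1) False that(2)] by blast
  qed
  have "\<exists>d. keys d \<subseteq> V \<and> rep_within V G ((\<succeq>) d) (c g * g)" if "g \<in> S" for g
  proof -
    have "c g * g = (\<Sum>t\<in>keys (c g). single t (lookup (c g) t) * g)"
      by (subst poly_mapping_sum_single[of "c g"]) (simp add: sum_distrib_right)
    moreover have "\<exists>d. keys d \<subseteq> V \<and> rep_within V G ((\<succeq>) d) (single t (lookup (c g) t) * g)"
      if "t \<in> keys (c g)" for t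
      using S(2,3) \<open>g \<in> S\<close> that unfolding polys_def by (intro term_rep) blast+
    ultimately show ?thesis
      using rep_at_most_exists_sum[of "keys (c g)"] by simp
  qed
  then show ?thesis
    unfolding S(4) by (rule rep_at_most_exists_sum[OF S(1)])
qed

theorem lm_divisible:
  assumes "f \<in> ideal_gen V G" "f \<noteq> 0"
  shows "\<exists>g\<in>G. g \<noteq> 0 \<and> (\<exists>t. keys t \<subseteq> V \<and> lm f = t + lm g)"
  using rep_at_most_exists[OF assms(1)] lm_divisible_if_rep assms(2) by blast

lemma groebner_basis: "finite G \<Longrightarrow> is_groebner_basis V r G (ideal_gen V G)"
  using is_groebner_basisI[OF G_polys] lm_divisible by blast

end

section \<open>Two-by-two minors of a matrix with zero pattern\<close>

definition minor :: "var set \<Rightarrow> nat \<Rightarrow> nat \<Rightarrow> nat \<Rightarrow> nat \<Rightarrow> cpoly" where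
  "minor Z a b c d = Xmat Z a c * Xmat Z b d - Xmat Z a d * Xmat Z b c"

lemma Xmat_mult_Xmat:
  "Xmat Z i j * Xmat Z k l =
    (if (i, j) \<in> Z \<or> (k, l) \<in> Z then 0 else single (mon_of (i, j) + mon_of (k, l)) 1)"
  by (simp add: Xmat_def Var_eq_single_mon_of mult_single)

lemma single_mult_Xmat:
  "single w c * Xmat Z i j = (if (i, j) \<in> Z then 0 else single (w + mon_of (i, j)) c)"
  by (simp add: Xmat_def Var_eq_single_mon_of mult_single)

lemma minor_transpose_both: "minor Z b a d c = minor Z a b c d"
  by (simp add: minor_def mult.commute)

lemma minor_swap_cols: "minor Z a b d c = - minor Z a b c d"
  by (simp add: minor_def)

lemma minor_swap_rows: "minor Z b a c d = - minor Z a b c d"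
  by (simp add: minor_def mult.commute)

lemma keys_minorE:
  assumes "k \<in> keys (minor Z a b c d)"
  obtains "(a, c) \<notin> Z" "(b, d) \<notin> Z" "k = mon_of (a, c) + mon_of (b, d)"
    | "(a, d) \<notin> Z" "(b, c) \<notin> Z" "k = mon_of (a, d) + mon_of (b, c)"
proof -
  have "k \<in> keys (Xmat Z a c * Xmat Z b d) \<or> k \<in> keys (Xmat Z a d * Xmat Z b c)"
    using assms keys_diff[of "Xmat Z a c * Xmat Z b d" "Xmat Z a d * Xmat Z b c"]
    unfolding minor_def by blast
  then show ?thesis
    using that unfolding Xmat_mult_Xmat by (auto split: if_splits)
qed

lemma diag_ne_antidiag:
  assumes "a \<noteq> b" "c \<noteq> d"
  shows "mon_of (a, d) + mon_of (b, c) \<noteq> mon_of (a, c) + mon_of (b, d)"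
proof
  assume "mon_of (a, d) + mon_of (b, c) = mon_of (a, c) + mon_of (b, d)"
  then have "lookup (mon_of (a, d) + mon_of (b, c)) (a, c)
      = lookup (mon_of (a, c) + mon_of (b, d)) (a, c)"
    by simp
  then show False
    using assms by (simp add: lookup_add split: if_splits)
qed

lemma lookup_minor_diag:
  assumes "a \<noteq> b" "c \<noteq> d" "(a, c) \<notin> Z" "(b, d) \<notin> Z"
  shows "lookup (minor Z a b c d) (mon_of (a, c) + mon_of (b, d)) = 1"
  using assms diag_ne_antidiag[OF assms(1,2)]
  by (simp add: minor_def Xmat_mult_Xmat lookup_minus lookup_single when_def)

text \<open>The variable set is kept as a parameter, fixed by \<open>vars_eq\<close>, so that the notation
  of \<open>drl_order\<close> is inherited.\<close>

locale minors_setting = drl_order V r for V :: "var set" and r :: "var rel" +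
  fixes m n :: nat and Z :: "var set"
  assumes vars_eq: "V = {1..m} \<times> {1..n} - Z"
begin

lemma minor_mem_minors2:
  assumes "1 \<le> a" "a < b" "b \<le> m" "1 \<le> c" "c < d" "d \<le> n"
  shows "minor Z a b c d \<in> minors2 m n Z"
  unfolding minors2_def minor_def using assms by blast

lemma minors2_cases:
  assumes "g \<in> minors2 m n Z"
  obtains a b c d where "g = minor Z a b c d" "1 \<le> a" "a < b" "b \<le> m" "1 \<le> c" "c < d" "d \<le> n"
  using assms that unfolding minors2_def minor_def by blast

lemma minor_or_uminus_mem_minors2:
  assumes "a \<noteq> b" "c \<noteq> d" "a \<in> {1..m}" "b \<in> {1..m}" "c \<in> {1..n}" "d \<in> {1..n}"
  shows "minor Z a b c d \<in> minors2 m n Z \<or> - minor Z a b c d \<in> minors2 m n Z"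
proof -
  consider "a < b" "c < d" | "a < b" "d < c" | "b < a" "c < d" | "b < a" "d < c"
    using assms(1,2) by linarith
  then show ?thesis
  proof cases
    case 1
    then show ?thesis using assms minor_mem_minors2[of a b c d] by simp
  next
    case 2
    then show ?thesis using assms minor_mem_minors2[of a b d c] minor_swap_cols[of Z a b d c] by simp
  next
    case 3
    then show ?thesis using assms minor_mem_minors2[of b a c d] minor_swap_rows[of Z b a c d] by simp
  next
    case 4
    then show ?thesis using assms minor_mem_minors2[of b a d c] minor_transpose_both[of Z b a d c] by simp
  qed
qed

lemma minors2_polys: "minors2 m n Z \<subseteq> polys V"
proof
  fix g assume "g \<in> minors2 m n Z"
  then obtain a b c d where g: "g = minor Z a b c d" "1 \<le> a" "a < b" "b \<le> m" "1 \<le> c" "c < d" "d \<le> n"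
    by (rule minors2_cases)
  show "g \<in> polys V"
    unfolding polys_def
  proof (intro CollectI ballI)
    fix k assume "k \<in> keys g"
    then show "keys k \<subseteq> V"
      unfolding g(1)
      by (rule keys_minorE) (use g(2-7) keys_mon_of_add in \<open>fastforce simp: vars_eq\<close>)+
  qed
qed

lemma finite_minors2: "finite (minors2 m n Z)"
proof -
  have "minors2 m n Z \<subseteq> (\<lambda>(a, b, c, d). minor Z a b c d) ` ({1..m} \<times> {1..m} \<times> {1..n} \<times> {1..n})"
  proof
    fix g assume "g \<in> minors2 m n Z"
    then obtain a b c d where "g = minor Z a b c d" "1 \<le> a" "a < b" "b \<le> m" "1 \<le> c" "c < d" "d \<le> n"
      by (rule minors2_cases)
    then show "g \<in> (\<lambda>(a, b, c, d). minor Z a b c d) ` ({1..m} \<times> {1..m} \<times> {1..n} \<times> {1..n})"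
      by (intro image_eqI[of _ _ "(a, b, c, d)"]) auto
  qed
  then show ?thesis
    by (rule finite_subset) simp
qed

definition diag_leading :: "nat \<Rightarrow> nat \<Rightarrow> nat \<Rightarrow> nat \<Rightarrow> bool" where
  "diag_leading a b c d \<longleftrightarrow> a \<noteq> b \<and> c \<noteq> d \<and> a \<in> {1..m} \<and> b \<in> {1..m} \<and> c \<in> {1..n} \<and> d \<in> {1..n} \<and>
     (a, c) \<notin> Z \<and> (b, d) \<notin> Z \<and>
     ((a, d) \<notin> Z \<and> (b, c) \<notin> Z \<longrightarrow> mon_of (a, c) + mon_of (b, d) \<succ> mon_of (a, d) + mon_of (b, c))"

lemma diag_leading_transpose_both: "diag_leading a b c d \<Longrightarrow> diag_leading b a d c"
  unfolding diag_leading_def by (simp add: add.commute conj_commute)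

lemma diag_leadingD:
  assumes "diag_leading a b c d"
  shows "a \<noteq> b" "c \<noteq> d" "a \<in> {1..m}" "b \<in> {1..m}" "c \<in> {1..n}" "d \<in> {1..n}"
    "(a, c) \<notin> Z" "(b, d) \<notin> Z"
    "(a, d) \<notin> Z \<Longrightarrow> (b, c) \<notin> Z \<Longrightarrow> mon_of (a, c) + mon_of (b, d) \<succ> mon_of (a, d) + mon_of (b, c)"
  using assms unfolding diag_leading_def by auto

lemma init_mon_minor:
  assumes "diag_leading a b c d"
  shows "init_mon V r (minor Z a b c d) = mon_of (a, c) + mon_of (b, d)"
proof (rule init_mon_eqI)
  note L = diag_leadingD[OF assms]
  show "mon_of (a, c) + mon_of (b, d) \<in> keys (minor Z a b c d)"
    using lookup_minor_diag[OF L(1,2,7,8)] by (simp add: in_keys_iff)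
  show "\<forall>k\<in>keys (minor Z a b c d). k \<noteq> mon_of (a, c) + mon_of (b, d) \<longrightarrow>
      mon_of (a, c) + mon_of (b, d) \<succ> k"
    using L(9) by (blast elim: keys_minorE)
qed

lemma diag_leading_cases:
  assumes "a \<noteq> b" "c \<noteq> d" "a \<in> {1..m}" "b \<in> {1..m}" "c \<in> {1..n}" "d \<in> {1..n}"
    and "minor Z a b c d \<noteq> 0"
  shows "diag_leading a b c d \<or> diag_leading a b d c"
proof (cases "(a, c) \<notin> Z \<and> (b, d) \<notin> Z")
  case diag: True
  show ?thesis
  proof (cases "(a, d) \<notin> Z \<and> (b, c) \<notin> Z")
    case antidiag: True
    have "mon_of (a, d) + mon_of (b, c) \<noteq> mon_of (a, c) + mon_of (b, d)"
      using diag_ne_antidiag assms(1,2) by simp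
    moreover have "keys (mon_of (a, c) + mon_of (b, d)) \<subseteq> V" "keys (mon_of (a, d) + mon_of (b, c)) \<subseteq> V"
      using diag antidiag assms(3-6) keys_mon_of_add unfolding vars_eq by fastforce+
    ultimately consider "mon_of (a, c) + mon_of (b, d) \<succ> mon_of (a, d) + mon_of (b, c)"
      | "mon_of (a, d) + mon_of (b, c) \<succ> mon_of (a, c) + mon_of (b, d)"
      using drl_total by blast
    then show ?thesis
      using assms(1-6) diag antidiag by cases (simp_all add: diag_leading_def)
  next
    case False
    then show ?thesis
      using assms(1-6) diag by (auto simp: diag_leading_def)
  qed
next
  case False
  then have "minor Z a b c d = - (Xmat Z a d * Xmat Z b c)"
    by (auto simp: minor_def Xmat_mult_Xmat)
  then have "(a, d) \<notin> Z \<and> (b, c) \<notin> Z"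
    using assms(7) by (auto simp: Xmat_mult_Xmat split: if_splits)
  then show ?thesis
    using assms(1-6) False by (auto simp: diag_leading_def)
qed

lemma minors2_normal_form:
  assumes "g \<in> minors2 m n Z" "g \<noteq> 0"
  obtains a b c d where "diag_leading a b c d" "g = minor Z a b c d \<or> g = - minor Z a b c d"
proof -
  obtain a b c d where g: "g = minor Z a b c d" "1 \<le> a" "a < b" "b \<le> m" "1 \<le> c" "c < d" "d \<le> n"
    using assms(1) by (rule minors2_cases)
  then have "diag_leading a b c d \<or> diag_leading a b d c"
    using assms(2) by (intro diag_leading_cases) auto
  moreover have "g = - minor Z a b d c"
    using g(1) minor_swap_cols[of Z a b c d] by simp
  ultimately show ?thesis
    using that g(1) by blast
qed

lemma minor_normalized:
  assumes "g \<in> minors2 m n Z" "g \<noteq> 0"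
  obtains a b c d where "diag_leading a b c d" "init_mon V r g = mon_of (a, c) + mon_of (b, d)"
    "\<And>t. single t (1 / lookup g (init_mon V r g)) * g = single t 1 * minor Z a b c d"
proof -
  obtain a b c d where L: "diag_leading a b c d" and g: "g = minor Z a b c d \<or> g = - minor Z a b c d"
    using minors2_normal_form[OF assms] by blast
  note lm = init_mon_minor[OF L]
  note lc = lookup_minor_diag[OF diag_leadingD(1,2,7,8)[OF L]]
  from g show ?thesis
  proof
    assume "g = minor Z a b c d"
    then show ?thesis
      using that[OF L] lm lc by simp
  next
    assume "g = - minor Z a b c d"
    then show ?thesis
      using that[OF L] lm lc by (simp add: single_uminus)
  qed
qed

end

section \<open>S-polynomials of minors\<close>

context minors_setting
begin

lemma rep_minor_multiple:
  assumes "a \<noteq> b" "c \<noteq> d" "a \<in> {1..m}" "b \<in> {1..m}" "c \<in> {1..n}" "d \<in> {1..n}" "keys u \<subseteq> V"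
    and diag: "(a, c) \<notin> Z \<Longrightarrow> (b, d) \<notin> Z \<Longrightarrow> P (u + mon_of (a, c) + mon_of (b, d))"
    and antidiag: "(a, d) \<notin> Z \<Longrightarrow> (b, c) \<notin> Z \<Longrightarrow> P (u + mon_of (a, d) + mon_of (b, c))"
  shows "rep_within V (minors2 m n Z) P (single u \<kappa> * minor Z a b c d)"
proof -
  have P: "\<forall>k\<in>keys (minor Z a b c d). P (u + k)"
    using diag antidiag by (auto elim: keys_minorE simp: add.assoc)
  from minor_or_uminus_mem_minors2[OF assms(1-6)] show ?thesis
  proof
    assume "minor Z a b c d \<in> minors2 m n Z"
    then show ?thesis
      using rep_within_term assms(7) P by blast
  next
    assume M: "- minor Z a b c d \<in> minors2 m n Z"
    have "\<forall>k\<in>keys (- minor Z a b c d). P (u + k)"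
      using P by simp
    from rep_within_term[OF M assms(7) this, of "- \<kappa>"] show ?thesis
      by (simp add: single_uminus)
  qed
qed

lemma rep_var_minor_multiple:
  assumes "a \<noteq> b" "c \<noteq> d" "a \<in> {1..m}" "b \<in> {1..m}" "c \<in> {1..n}" "d \<in> {1..n}"
    and "i \<in> {1..m}" "j \<in> {1..n}" "keys w \<subseteq> V"
    and diag: "(i, j) \<notin> Z \<Longrightarrow> (a, c) \<notin> Z \<Longrightarrow> (b, d) \<notin> Z \<Longrightarrow>
      P (w + mon_of (i, j) + mon_of (a, c) + mon_of (b, d))"
    and antidiag: "(i, j) \<notin> Z \<Longrightarrow> (a, d) \<notin> Z \<Longrightarrow> (b, c) \<notin> Z \<Longrightarrow>
      P (w + mon_of (i, j) + mon_of (a, d) + mon_of (b, c))"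
  shows "rep_within V (minors2 m n Z) P (single w \<kappa> * Xmat Z i j * minor Z a b c d)"
proof (cases "(i, j) \<in> Z")
  case True
  then show ?thesis
    by (simp add: single_mult_Xmat rep_within.zero)
next
  case False
  then have "keys (w + mon_of (i, j)) \<subseteq> V"
    using assms(7-9) keys_add[of w "mon_of (i, j)"] unfolding vars_eq by auto
  then have "rep_within V (minors2 m n Z) P (single (w + mon_of (i, j)) \<kappa> * minor Z a b c d)"
    by (rule rep_minor_multiple[OF assms(1-6)]) (use diag antidiag False in blast)+
  then show ?thesis
    using False by (simp add: single_mult_Xmat)
qed

lemma rep_var_var_minor_multiple:
  assumes "a \<noteq> b" "c \<noteq> d" "a \<in> {1..m}" "b \<in> {1..m}" "c \<in> {1..n}" "d \<in> {1..n}"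
    and "i \<in> {1..m}" "j \<in> {1..n}" "i' \<in> {1..m}" "j' \<in> {1..n}" "keys w \<subseteq> V"
    and diag: "(i, j) \<notin> Z \<Longrightarrow> (i', j') \<notin> Z \<Longrightarrow> (a, c) \<notin> Z \<Longrightarrow> (b, d) \<notin> Z \<Longrightarrow>
      P (w + mon_of (i, j) + mon_of (i', j') + mon_of (a, c) + mon_of (b, d))"
    and antidiag: "(i, j) \<notin> Z \<Longrightarrow> (i', j') \<notin> Z \<Longrightarrow> (a, d) \<notin> Z \<Longrightarrow> (b, c) \<notin> Z \<Longrightarrow>
      P (w + mon_of (i, j) + mon_of (i', j') + mon_of (a, d) + mon_of (b, c))"
  shows "rep_within V (minors2 m n Z) P (single w \<kappa> * Xmat Z i j * Xmat Z i' j' * minor Z a b c d)"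
proof (cases "(i, j) \<in> Z")
  case True
  then show ?thesis
    by (simp add: single_mult_Xmat rep_within.zero)
next
  case False
  then have "keys (w + mon_of (i, j)) \<subseteq> V"
    using assms(7,8,11) keys_add[of w "mon_of (i, j)"] unfolding vars_eq by auto
  then have "rep_within V (minors2 m n Z) P (single (w + mon_of (i, j)) \<kappa> * Xmat Z i' j' * minor Z a b c d)"
    by (rule rep_var_minor_multiple[OF assms(1-6,9,10)]) (use diag antidiag False in blast)+
  then show ?thesis
    using False by (simp add: single_mult_Xmat)
qed

lemma spoly_same_rows:
  assumes g: "diag_leading a b c d" and h: "diag_leading a b c d'" and "d \<noteq> d'"
    and w: "keys w \<subseteq> V"
  defines "D \<equiv> w + mon_of (b, d') + mon_of (a, c) + mon_of (b, d)"
  shows "rep_within V (minors2 m n Z) ((\<succ>) D)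
    (single w 1 * (Var (b, d') * minor Z a b c d - Var (b, d) * minor Z a b c d'))"
proof -
  note G = diag_leadingD[OF g] and H = diag_leadingD[OF h]
  have "Var (b, d') * minor Z a b c d - Var (b, d) * minor Z a b c d'
      = Xmat Z b c * minor Z a b d' d"
    using G H by (simp add: minor_def Xmat_def algebra_simps)
  moreover have "rep_within V (minors2 m n Z) ((\<succ>) D) (single w 1 * Xmat Z b c * minor Z a b d' d)"
  proof (rule rep_var_minor_multiple[OF G(1) _ G(3,4) H(6) G(6) G(4) H(5) w])
    show "d' \<noteq> d"
      using \<open>d \<noteq> d'\<close> by simp
    show "D \<succ> w + mon_of (b, c) + mon_of (a, d') + mon_of (b, d)" if "(b, c) \<notin> Z" "(a, d') \<notin> Z"
      by (rule drl_greater_addI[OF H(9)[OF that(2,1)], where c = "w + mon_of (b, d)"])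
        (simp_all add: D_def ac_simps)
    show "D \<succ> w + mon_of (b, c) + mon_of (a, d) + mon_of (b, d')" if "(b, c) \<notin> Z" "(a, d) \<notin> Z"
      by (rule drl_greater_addI[OF G(9)[OF that(2,1)], where c = "w + mon_of (b, d')"])
        (simp_all add: D_def ac_simps)
  qed
  ultimately show ?thesis
    by (simp add: mult.assoc)
qed

lemma spoly_same_cols:
  assumes g: "diag_leading a b c d" and h: "diag_leading a b' c d" and "b \<noteq> b'"
    and w: "keys w \<subseteq> V"
  defines "D \<equiv> w + mon_of (b', d) + mon_of (a, c) + mon_of (b, d)"
  shows "rep_within V (minors2 m n Z) ((\<succ>) D)
    (single w 1 * (Var (b', d) * minor Z a b c d - Var (b, d) * minor Z a b' c d))"
proof -
  note G = diag_leadingD[OF g] and H = diag_leadingD[OF h]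
  have "Var (b', d) * minor Z a b c d - Var (b, d) * minor Z a b' c d
      = Xmat Z a d * minor Z b b' d c"
    using G H by (simp add: minor_def Xmat_def algebra_simps)
  moreover have "rep_within V (minors2 m n Z) ((\<succ>) D) (single w 1 * Xmat Z a d * minor Z b b' d c)"
  proof (rule rep_var_minor_multiple[OF \<open>b \<noteq> b'\<close> _ G(4) H(4) G(6,5,3,6) w])
    show "d \<noteq> c"
      using G(2) by simp
    show "D \<succ> w + mon_of (a, d) + mon_of (b, d) + mon_of (b', c)" if "(a, d) \<notin> Z" "(b', c) \<notin> Z"
      by (rule drl_greater_addI[OF H(9)[OF that], where c = "w + mon_of (b, d)"])
        (simp_all add: D_def ac_simps)
    show "D \<succ> w + mon_of (a, d) + mon_of (b, c) + mon_of (b', d)" if "(a, d) \<notin> Z" "(b, c) \<notin> Z"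
      by (rule drl_greater_addI[OF G(9)[OF that], where c = "w + mon_of (b', d)"])
        (simp_all add: D_def ac_simps)
  qed
  ultimately show ?thesis
    by (simp add: mult.assoc)
qed

lemma spoly_coprime:
  assumes g: "diag_leading a b c d" and h: "diag_leading a' b' c' d'" and w: "keys w \<subseteq> V"
  defines "D \<equiv> w + mon_of (a', c') + mon_of (b', d') + mon_of (a, c) + mon_of (b, d)"
  shows "rep_within V (minors2 m n Z) ((\<succ>) D) (single w 1 *
    (Var (a', c') * Var (b', d') * minor Z a b c d - Var (a, c) * Var (b, d) * minor Z a' b' c' d'))"
proof -
  note G = diag_leadingD[OF g] and H = diag_leadingD[OF h]
  \<comment> \<open>replacing each leading term by the trailing term of its minor (product criterion)\<close>
  have syz: "Var (a', c') * Var (b', d') * minor Z a b c d - Var (a, c) * Var (b, d) * minor Z a' b' c' d'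
      = Xmat Z a' d' * Xmat Z b' c' * minor Z a b c d - Xmat Z a d * Xmat Z b c * minor Z a' b' c' d'"
    using G H by (simp add: minor_def Xmat_def algebra_simps)
  have eq: "single w 1 *
      (Var (a', c') * Var (b', d') * minor Z a b c d - Var (a, c) * Var (b, d) * minor Z a' b' c' d')
    = single w 1 * Xmat Z a' d' * Xmat Z b' c' * minor Z a b c d
      - single w 1 * Xmat Z a d * Xmat Z b c * minor Z a' b' c' d'"
    unfolding syz by (simp add: right_diff_distrib mult.assoc)
  have D_gt_G: "D \<succ> w + mon_of (a', c') + mon_of (b', d') + mon_of (a, d) + mon_of (b, c)"
    if "(a, d) \<notin> Z" "(b, c) \<notin> Z"
    by (rule drl_greater_addI[OF G(9)[OF that], where c = "w + mon_of (a', c') + mon_of (b', d')"])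
      (simp_all add: D_def ac_simps)
  have D_gt_H: "D \<succ> w + mon_of (a', d') + mon_of (b', c') + mon_of (a, c) + mon_of (b, d)"
    if "(a', d') \<notin> Z" "(b', c') \<notin> Z"
    by (rule drl_greater_addI[OF H(9)[OF that], where c = "w + mon_of (a, c) + mon_of (b, d)"])
      (simp_all add: D_def ac_simps)
  have D_gt_both: "D \<succ> w + mon_of (a', d') + mon_of (b', c') + mon_of (a, d) + mon_of (b, c)"
    if "(a, d) \<notin> Z" "(b, c) \<notin> Z" "(a', d') \<notin> Z" "(b', c') \<notin> Z"
  proof -
    have "w + mon_of (a', c') + mon_of (b', d') + mon_of (a, d) + mon_of (b, c)
        \<succ> w + mon_of (a', d') + mon_of (b', c') + mon_of (a, d) + mon_of (b, c)"
      by (rule drl_greater_addI[OF H(9)[OF that(3,4)], where c = "w + mon_of (a, d) + mon_of (b, c)"])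
        (simp_all add: ac_simps)
    then show ?thesis
      using D_gt_G[OF that(1,2)] drl_trans by blast
  qed
  have "rep_within V (minors2 m n Z) ((\<succ>) D)
      (single w 1 * Xmat Z a' d' * Xmat Z b' c' * minor Z a b c d)"
    by (rule rep_var_var_minor_multiple[OF G(1-6) H(3,6,4,5) w])
      (use D_gt_H D_gt_both in \<open>simp_all add: ac_simps\<close>)
  moreover have "rep_within V (minors2 m n Z) ((\<succ>) D)
      (single w 1 * Xmat Z a d * Xmat Z b c * minor Z a' b' c' d')"
    by (rule rep_var_var_minor_multiple[OF H(1-6) G(3,6,4,5) w])
      (use D_gt_G D_gt_both in \<open>simp_all add: ac_simps\<close>)
  ultimately show ?thesis
    unfolding eq by (rule rep_within_diff)
qed

lemma spoly_3x3_first_expansion: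
  assumes g: "diag_leading a b c d" and h: "diag_leading a b' c d'" and "b \<noteq> b'" "d \<noteq> d'"
    and w: "keys w \<subseteq> V"
  defines "D \<equiv> w + mon_of (b', d') + mon_of (a, c) + mon_of (b, d)"
  assumes cubic: "(a, d) \<notin> Z \<Longrightarrow> (b, d') \<notin> Z \<Longrightarrow> (b', c) \<notin> Z \<Longrightarrow>
    D \<succ> w + mon_of (a, d) + mon_of (b, d') + mon_of (b', c)"
  shows "rep_within V (minors2 m n Z) ((\<succ>) D)
    (single w 1 * (Var (b', d') * minor Z a b c d - Var (b, d) * minor Z a b' c d'))"
proof -
  note G = diag_leadingD[OF g] and H = diag_leadingD[OF h]
  have "Var (b', d') * minor Z a b c d - Var (b, d) * minor Z a b' c d'
      = Xmat Z b' c * minor Z a b d' d + Xmat Z a d * minor Z b b' d' c"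
    using G H by (simp add: minor_def Xmat_def algebra_simps)
  moreover have "rep_within V (minors2 m n Z) ((\<succ>) D) (single w 1 * Xmat Z b' c * minor Z a b d' d)"
  proof (rule rep_var_minor_multiple[OF G(1) _ G(3,4) H(6) G(6) H(4) G(5) w])
    show "d' \<noteq> d"
      using \<open>d \<noteq> d'\<close> by simp
    show "D \<succ> w + mon_of (b', c) + mon_of (a, d') + mon_of (b, d)" if "(b', c) \<notin> Z" "(a, d') \<notin> Z"
      by (rule drl_greater_addI[OF H(9)[OF that(2,1)], where c = "w + mon_of (b, d)"])
        (simp_all add: D_def ac_simps)
    show "D \<succ> w + mon_of (b', c) + mon_of (a, d) + mon_of (b, d')"
      if "(b', c) \<notin> Z" "(a, d) \<notin> Z" "(b, d') \<notin> Z"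
      using cubic[OF that(2,3,1)] by (simp add: ac_simps)
  qed
  moreover have "rep_within V (minors2 m n Z) ((\<succ>) D) (single w 1 * Xmat Z a d * minor Z b b' d' c)"
  proof (rule rep_var_minor_multiple[OF \<open>b \<noteq> b'\<close> _ G(4) H(4) H(6) G(5) G(3) G(6) w])
    show "d' \<noteq> c"
      using H(2) by simp
    show "D \<succ> w + mon_of (a, d) + mon_of (b, d') + mon_of (b', c)"
      if "(a, d) \<notin> Z" "(b, d') \<notin> Z" "(b', c) \<notin> Z"
      using cubic[OF that] .
    show "D \<succ> w + mon_of (a, d) + mon_of (b, c) + mon_of (b', d')" if "(a, d) \<notin> Z" "(b, c) \<notin> Z"
      by (rule drl_greater_addI[OF G(9)[OF that], where c = "w + mon_of (b', d')"])
        (simp_all add: D_def ac_simps)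
  qed
  ultimately show ?thesis
    by (simp add: distrib_left mult.assoc rep_within_add)
qed

lemma spoly_3x3_second_expansion:
  assumes g: "diag_leading a b c d" and h: "diag_leading a b' c d'" and "b \<noteq> b'" "d \<noteq> d'"
    and w: "keys w \<subseteq> V"
  defines "D \<equiv> w + mon_of (b', d') + mon_of (a, c) + mon_of (b, d)"
  assumes cubic: "(a, d') \<notin> Z \<Longrightarrow> (b, c) \<notin> Z \<Longrightarrow> (b', d) \<notin> Z \<Longrightarrow>
    D \<succ> w + mon_of (a, d') + mon_of (b, c) + mon_of (b', d)"
  shows "rep_within V (minors2 m n Z) ((\<succ>) D)
    (single w 1 * (Var (b', d') * minor Z a b c d - Var (b, d) * minor Z a b' c d'))"
proof -
  note G = diag_leadingD[OF g] and H = diag_leadingD[OF h]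
  have "Var (b', d') * minor Z a b c d - Var (b, d) * minor Z a b' c d'
      = Xmat Z a d' * minor Z b b' d c + Xmat Z b c * minor Z a b' d' d"
    using G H by (simp add: minor_def Xmat_def algebra_simps)
  moreover have "rep_within V (minors2 m n Z) ((\<succ>) D) (single w 1 * Xmat Z a d' * minor Z b b' d c)"
  proof (rule rep_var_minor_multiple[OF \<open>b \<noteq> b'\<close> _ G(4) H(4) G(6) G(5) G(3) H(6) w])
    show "d \<noteq> c"
      using G(2) by simp
    show "D \<succ> w + mon_of (a, d') + mon_of (b, d) + mon_of (b', c)" if "(a, d') \<notin> Z" "(b', c) \<notin> Z"
      by (rule drl_greater_addI[OF H(9)[OF that], where c = "w + mon_of (b, d)"])
        (simp_all add: D_def ac_simps)
    show "D \<succ> w + mon_of (a, d') + mon_of (b, c) + mon_of (b', d)"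
      if "(a, d') \<notin> Z" "(b, c) \<notin> Z" "(b', d) \<notin> Z"
      using cubic[OF that] .
  qed
  moreover have "rep_within V (minors2 m n Z) ((\<succ>) D) (single w 1 * Xmat Z b c * minor Z a b' d' d)"
  proof (rule rep_var_minor_multiple[OF H(1) _ G(3) H(4) H(6) G(6) G(4) G(5) w])
    show "d' \<noteq> d"
      using \<open>d \<noteq> d'\<close> by simp
    show "D \<succ> w + mon_of (b, c) + mon_of (a, d') + mon_of (b', d)"
      if "(b, c) \<notin> Z" "(a, d') \<notin> Z" "(b', d) \<notin> Z"
      using cubic[OF that(2,1,3)] by (simp add: ac_simps)
    show "D \<succ> w + mon_of (b, c) + mon_of (a, d) + mon_of (b', d')" if "(b, c) \<notin> Z" "(a, d) \<notin> Z"
      by (rule drl_greater_addI[OF G(9)[OF that(2,1)], where c = "w + mon_of (b', d')"])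
        (simp_all add: D_def ac_simps)
  qed
  ultimately show ?thesis
    by (simp add: distrib_left mult.assoc rep_within_add)
qed

lemma cubic_dichotomy:
  fixes w :: mon
  assumes g: "diag_leading a b c d" and h: "diag_leading a b' c d'" and "b \<noteq> b'" "d \<noteq> d'"
    and off_diag: "(a, d) \<notin> Z" "(b, d') \<notin> Z" "(b', c) \<notin> Z"
      "(a, d') \<notin> Z" "(b, c) \<notin> Z" "(b', d) \<notin> Z"
  defines "D \<equiv> w + mon_of (b', d') + mon_of (a, c) + mon_of (b, d)"
  shows "D \<succ> w + mon_of (a, d) + mon_of (b, d') + mon_of (b', c)
    \<or> D \<succ> w + mon_of (a, d') + mon_of (b, c) + mon_of (b', d)"
proof -
  note G = diag_leadingD[OF g] and H = diag_leadingD[OF h]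
  have "mon_of (a, c) + mon_of (b, d) + mon_of (b', d') \<succ> mon_of (a, d) + mon_of (b, d') + mon_of (b', c)
    \<or> mon_of (a, c) + mon_of (b, d) + mon_of (b', d')
      \<succ> mon_of (a, d') + mon_of (b, c) + mon_of (b', d)"
  proof (rule drl_cubic_exchange)
    show "(a, c) \<in> V" "(b, d) \<in> V" "(b', d') \<in> V" "(a, d) \<in> V" "(b, c) \<in> V" "(a, d') \<in> V"
      "(b', c) \<in> V" "(b, d') \<in> V" "(b', d) \<in> V"
      using G H off_diag unfolding vars_eq by auto
    show "distinct [(a, c), (b, d), (b', d'), (a, d), (b, c), (a, d'), (b', c), (b, d'), (b', d)]"
      using G(1,2) H(1,2) \<open>b \<noteq> b'\<close> \<open>d \<noteq> d'\<close> by auto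
    show "mon_of (a, c) + mon_of (b, d) \<succ> mon_of (a, d) + mon_of (b, c)"
      using G(9) off_diag by blast
    show "mon_of (a, c) + mon_of (b', d') \<succ> mon_of (a, d') + mon_of (b', c)"
      using H(9) off_diag by blast
  qed
  then show ?thesis
  proof
    assume "mon_of (a, c) + mon_of (b, d) + mon_of (b', d')
      \<succ> mon_of (a, d) + mon_of (b, d') + mon_of (b', c)"
    then have "D \<succ> w + mon_of (a, d) + mon_of (b, d') + mon_of (b', c)"
      by (rule drl_greater_addI[where c = w]) (simp_all add: D_def ac_simps)
    then show ?thesis ..
  next
    assume "mon_of (a, c) + mon_of (b, d) + mon_of (b', d')
      \<succ> mon_of (a, d') + mon_of (b, c) + mon_of (b', d)"
    then have "D \<succ> w + mon_of (a, d') + mon_of (b, c) + mon_of (b', d)"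
      by (rule drl_greater_addI[where c = w]) (simp_all add: D_def ac_simps)
    then show ?thesis ..
  qed
qed

lemma spoly_3x3:
  assumes g: "diag_leading a b c d" and h: "diag_leading a b' c d'" and "b \<noteq> b'" "d \<noteq> d'"
    and w: "keys w \<subseteq> V"
  defines "D \<equiv> w + mon_of (b', d') + mon_of (a, c) + mon_of (b, d)"
  shows "rep_within V (minors2 m n Z) ((\<succ>) D)
    (single w 1 * (Var (b', d') * minor Z a b c d - Var (b, d) * minor Z a b' c d'))"
proof -
  consider "(a, d) \<notin> Z \<and> (b, d') \<notin> Z \<and> (b', c) \<notin> Z \<longrightarrow>
      D \<succ> w + mon_of (a, d) + mon_of (b, d') + mon_of (b', c)"
    | "(a, d') \<notin> Z \<and> (b, c) \<notin> Z \<and> (b', d) \<notin> Z \<longrightarrow>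
      D \<succ> w + mon_of (a, d') + mon_of (b, c) + mon_of (b', d)"
    using cubic_dichotomy[OF g h assms(3,4), of w] unfolding D_def by blast
  then show ?thesis
  proof cases
    case 1
    then show ?thesis
      using spoly_3x3_first_expansion[OF g h assms(3-5)] unfolding D_def by blast
  next
    case 2
    then show ?thesis
      using spoly_3x3_second_expansion[OF g h assms(3-5)] unfolding D_def by blast
  qed
qed

lemma spoly_shared_var:
  assumes g: "diag_leading a b c d" and h: "diag_leading a b' c d'" and t: "keys t \<subseteq> V"
    and eq: "t + (mon_of (a, c) + mon_of (b, d)) = s + (mon_of (a, c) + mon_of (b', d'))"
  shows "rep_within V (minors2 m n Z) ((\<succ>) (t + (mon_of (a, c) + mon_of (b, d))))
    (single t 1 * minor Z a b c d - single s 1 * minor Z a b' c d')"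
proof (cases "(b, d) = (b', d')")
  case True
  then have "s = t"
    using eq by (simp add: add_right_imp_eq)
  then show ?thesis
    using True by (simp add: rep_within.zero)
next
  case False
  define w where "w = t - mon_of (b', d')"
  have "mon_of (b', d') - mon_of (b, d) = mon_of (b', d')"
    "mon_of (b, d) - mon_of (b', d') = mon_of (b, d)"
    using False by (simp_all add: mon_diff_disjoint)
  then have tw: "t = w + mon_of (b', d')" and sw: "s = w + mon_of (b, d)"
    using mon_common_multiple[OF eq] by (simp_all add: w_def)
  have w: "keys w \<subseteq> V"
    using t keys_mon_diff unfolding w_def by blast
  have "single t 1 * minor Z a b c d - single s 1 * minor Z a b' c d'
      = single w 1 * (Var (b', d') * minor Z a b c d - Var (b, d) * minor Z a b' c d')"
    unfolding tw sw single_add_mon_of by (simp add: algebra_simps)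
  moreover have "t + (mon_of (a, c) + mon_of (b, d)) = w + mon_of (b', d') + mon_of (a, c) + mon_of (b, d)"
    by (simp add: tw ac_simps)
  moreover consider "b = b'" "d \<noteq> d'" | "d = d'" "b \<noteq> b'" | "b \<noteq> b'" "d \<noteq> d'"
    using False by auto
  then have "rep_within V (minors2 m n Z) ((\<succ>) (w + mon_of (b', d') + mon_of (a, c) + mon_of (b, d)))
      (single w 1 * (Var (b', d') * minor Z a b c d - Var (b, d) * minor Z a b' c d'))"
  proof cases
    case 1
    then show ?thesis
      using spoly_same_rows[OF g _ 1(2) w] h by simp
  next
    case 2
    then show ?thesis
      using spoly_same_cols[OF g _ 2(2) w] h by simp
  next
    case 3
    then show ?thesis
      using spoly_3x3[OF g h 3 w] by simp
  qed
  ultimately show ?thesis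
    by simp
qed

lemma spoly_disjoint_vars:
  assumes g: "diag_leading a b c d" and h: "diag_leading a' b' c' d'" and t: "keys t \<subseteq> V"
    and eq: "t + (mon_of (a, c) + mon_of (b, d)) = s + (mon_of (a', c') + mon_of (b', d'))"
    and disjoint: "{(a', c'), (b', d')} \<inter> {(a, c), (b, d)} = {}"
  shows "rep_within V (minors2 m n Z) ((\<succ>) (t + (mon_of (a, c) + mon_of (b, d))))
    (single t 1 * minor Z a b c d - single s 1 * minor Z a' b' c' d')"
proof -
  let ?A = "mon_of (a, c) + mon_of (b, d)" and ?B = "mon_of (a', c') + mon_of (b', d')"
  have "keys ?A \<subseteq> {(a, c), (b, d)}" "keys ?B \<subseteq> {(a', c'), (b', d')}"
    by (rule keys_mon_of_add)+
  then have "keys ?B \<inter> keys ?A = {}" "keys ?A \<inter> keys ?B = {}"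
    using disjoint by blast+
  then have "?B - ?A = ?B" "?A - ?B = ?A"
    by (simp_all only: mon_diff_disjoint)
  define w where "w = t - ?B"
  then have tw: "t = w + ?B" and sw: "s = w + ?A"
    using mon_common_multiple[OF eq] \<open>?B - ?A = ?B\<close> \<open>?A - ?B = ?A\<close> by simp_all
  have w: "keys w \<subseteq> V"
    using t keys_mon_diff unfolding w_def by blast
  have "single t 1 * minor Z a b c d - single s 1 * minor Z a' b' c' d'
      = single w 1 *
        (Var (a', c') * Var (b', d') * minor Z a b c d - Var (a, c) * Var (b, d) * minor Z a' b' c' d')"
    unfolding tw sw add.assoc[symmetric] single_add_mon_of by (simp add: algebra_simps)
  moreover have "t + ?A = w + mon_of (a', c') + mon_of (b', d') + mon_of (a, c) + mon_of (b, d)"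
    by (simp add: tw ac_simps)
  ultimately show ?thesis
    using spoly_coprime[OF g h w] by simp
qed

lemma spoly_minors:
  assumes g: "diag_leading a b c d" and h: "diag_leading a' b' c' d'" and t: "keys t \<subseteq> V"
    and eq: "t + (mon_of (a, c) + mon_of (b, d)) = s + (mon_of (a', c') + mon_of (b', d'))"
  shows "rep_within V (minors2 m n Z) ((\<succ>) (t + (mon_of (a, c) + mon_of (b, d))))
    (single t 1 * minor Z a b c d - single s 1 * minor Z a' b' c' d')"
proof -
  \<comment> \<open>transposing a minor swaps the two variables of its leading monomial\<close>
  note g' = diag_leading_transpose_both[OF g] and h' = diag_leading_transpose_both[OF h]
  have eq': "t + (mon_of (b, d) + mon_of (a, c)) = s + (mon_of (a', c') + mon_of (b', d'))"
    "t + (mon_of (a, c) + mon_of (b, d)) = s + (mon_of (b', d') + mon_of (a', c'))"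
    "t + (mon_of (b, d) + mon_of (a, c)) = s + (mon_of (b', d') + mon_of (a', c'))"
    using eq by (simp_all add: ac_simps)
  consider "(a', c') = (a, c)" | "(b', d') = (a, c)" | "(a', c') = (b, d)" | "(b', d') = (b, d)"
    | "{(a', c'), (b', d')} \<inter> {(a, c), (b, d)} = {}"
    by blast
  then show ?thesis
  proof cases
    case 1
    then show ?thesis
      using spoly_shared_var[OF g _ t, of b' d' s] h eq by simp
  next
    case 2
    then show ?thesis
      using spoly_shared_var[OF g _ t, of a' c' s] h' eq'(2) by (simp add: minor_transpose_both)
  next
    case 3
    then show ?thesis
      using spoly_shared_var[OF g' _ t, of b' d' s] h eq'(1) by (simp add: minor_transpose_both ac_simps)
  next
    case 4
    then show ?thesis
      using spoly_shared_var[OF g' _ t, of a' c' s] h' eq'(3) by (simp add: minor_transpose_both ac_simps)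
  next
    case 5
    then show ?thesis
      by (rule spoly_disjoint_vars[OF g h t eq])
  qed
qed

lemma spoly_rep_below_minors2:
  assumes "g \<in> minors2 m n Z" "h \<in> minors2 m n Z" "g \<noteq> 0" "h \<noteq> 0" "keys t \<subseteq> V"
    and "t + init_mon V r g = D" "s + init_mon V r h = D"
  shows "rep_within V (minors2 m n Z) ((\<succ>) D) (single t (1 / lookup g (init_mon V r g)) * g
    - single s (1 / lookup h (init_mon V r h)) * h)"
proof -
  obtain a b c d where g: "diag_leading a b c d" "init_mon V r g = mon_of (a, c) + mon_of (b, d)"
      "\<And>t. single t (1 / lookup g (init_mon V r g)) * g = single t 1 * minor Z a b c d"
    using minor_normalized[OF assms(1,3)] by blast
  obtain a' b' c' d' where h: "diag_leading a' b' c' d'"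
      "init_mon V r h = mon_of (a', c') + mon_of (b', d')"
      "\<And>s. single s (1 / lookup h (init_mon V r h)) * h = single s 1 * minor Z a' b' c' d'"
    using minor_normalized[OF assms(2,4)] by blast
  show ?thesis
    unfolding g(3) h(3) using spoly_minors[OF g(1) h(1) assms(5), of s] assms(6,7) g(2) h(2) by simp
qed

theorem groebner_basis_minors2: "is_groebner_basis V r (minors2 m n Z) (ideal_gen V (minors2 m n Z))"
proof -
  interpret spoly_criterion V r "minors2 m n Z"
    using minors2_polys spoly_rep_below_minors2 by unfold_locales blast+
  show ?thesis
    using groebner_basis finite_minors2 by blast
qed

end

theorem theorem5p5:
  fixes m n :: nat and Z :: "var set" and r :: "var rel"
  assumes "m \<ge> 1" and "n \<ge> 1"
    and "Z \<subseteq> {1..m} \<times> {1..n}"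
    and "strict_linear_order_on ({1..m} \<times> {1..n} - Z) r"
  shows "is_groebner_basis ({1..m} \<times> {1..n} - Z) r (minors2 m n Z)
           (ideal_gen ({1..m} \<times> {1..n} - Z) (minors2 m n Z))"
proof -
  interpret minors_setting "{1..m} \<times> {1..n} - Z" r m n Z
    using assms(4) unfolding minors_setting_def minors_setting_axioms_def drl_order_def by simp
  show ?thesis
    by (rule groebner_basis_minors2)
qed

end
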